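(* For all dyadic intervals $I,J$ of $\mathbb{R}$, \[ \int_{\mathbb{C}_+}f_I(x+iy)\overline{f_J(x+iy)}\,y\,dx\,dy=|I|\,\delta_{IJ}. \]
   Context: Dyadic intervals of $\mathbb{R}$ are $[2^{-j}k,2^{-j}(k+1))$, $j,k\in\mathbb{Z}$; $|I|$ is the length and $C_I$ the center; $\delta_{IJ}$ is the Kronecker delta. Let $\psi$ be an even Schwartz function with $\hat\psi\ge0$, $\operatorname{supp}\hat\psi\subset[-4/3,-1/3]\cup[1/3,4/3]$, $\hat\psi>0$ on $[3/8,5/4]$, such that $\psi_I(x)=|I|^{-1/2}\psi((x-C_I)/|I|)$, $I$ ranging over dyadic intervals, form an orthonormal basis of $L^2(\mathbb{R})$ (Fourier transform $\hat f(\xi)=\int f(x)e^{-2\pi ix\xi}dx$). $D$ is the Fourier multiplier $\widehat{Df}(\xi)=4\pi|\xi|\hat f(\xi)$. Set $f_I=|I|^{1/2}D\psi_I$, extended to $\mathbb{C}_+=\{x+iy:y>0\}$ by Poisson extension $f_I(x+iy)=\int_{\mathbb{R}}f_I(t)\frac{1}{\pi}\frac{y}{(x-t)^2+y^2}dt$. *)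

theory Defs
  imports "HOL-Analysis.Analysis"
begin

definition fourier :: "(real \<Rightarrow> complex) \<Rightarrow> real \<Rightarrow> complex" where
  "fourier f \<xi> = (LINT x|lborel. f x * cis (- 2 * pi * x * \<xi>))"

definition inv_fourier :: "(real \<Rightarrow> complex) \<Rightarrow> real \<Rightarrow> complex" where
  "inv_fourier g x = (LINT \<xi>|lborel. g \<xi> * cis (2 * pi * x * \<xi>))"

definition schwartz :: "(real \<Rightarrow> complex) \<Rightarrow> bool" where
  "schwartz f \<longleftrightarrow> (\<exists>F :: nat \<Rightarrow> real \<Rightarrow> complex.
      F 0 = f \<and>
      (\<forall>n x. (F n has_vector_derivative F (Suc n) x) (at x)) \<and>
      (\<forall>k n. \<exists>C. \<forall>x. \<bar>x\<bar> ^ k * norm (F n x) \<le> C))"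

definition square_integrable :: "(real \<Rightarrow> complex) \<Rightarrow> bool" where
  "square_integrable f \<longleftrightarrow> f \<in> borel_measurable lborel \<and> integrable lborel (\<lambda>x. (norm (f x))\<^sup>2)"

definition L2_inner :: "(real \<Rightarrow> complex) \<Rightarrow> (real \<Rightarrow> complex) \<Rightarrow> complex" where
  "L2_inner f g = (LINT x|lborel. f x * cnj (g x))"

definition L2_orthonormal_basis :: "'i set \<Rightarrow> ('i \<Rightarrow> real \<Rightarrow> complex) \<Rightarrow> bool" where
  "L2_orthonormal_basis A e \<longleftrightarrow>
     (\<forall>i\<in>A. square_integrable (e i)) \<and>
     (\<forall>i\<in>A. \<forall>j\<in>A. L2_inner (e i) (e j) = (if i = j then 1 else 0)) \<and>
     (\<forall>f. square_integrable f \<longrightarrow> (\<forall>i\<in>A. L2_inner f (e i) = 0) \<longrightarrow>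
          (AE x in lborel. f x = 0))"

text \<open>Dyadic intervals \<open>[2^{-j} k, 2^{-j}(k+1))\<close> are indexed by \<open>(j,k) \<in> Z \<times> Z\<close>;
  distinct pairs give distinct intervals.\<close>
definition dyadic_interval :: "int \<times> int \<Rightarrow> real set" where
  "dyadic_interval I = (case I of (j,k) \<Rightarrow> {2 powr (- j) * k ..< 2 powr (- j) * (k + 1)})"

definition dlen :: "int \<times> int \<Rightarrow> real" where
  "dlen I = (case I of (j,k) \<Rightarrow> 2 powr (- real_of_int j))"

definition dcenter :: "int \<times> int \<Rightarrow> real" where
  "dcenter I = (case I of (j,k) \<Rightarrow> 2 powr (- real_of_int j) * (real_of_int k + 1/2))"

definition psi_I :: "(real \<Rightarrow> complex) \<Rightarrow> int \<times> int \<Rightarrow> real \<Rightarrow> complex" where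
  "psi_I \<psi> I x = complex_of_real (dlen I powr (-1/2)) * \<psi> ((x - dcenter I) / dlen I)"

definition Dop :: "(real \<Rightarrow> complex) \<Rightarrow> real \<Rightarrow> complex" where
  "Dop f = inv_fourier (\<lambda>\<xi>. complex_of_real (4 * pi * \<bar>\<xi>\<bar>) * fourier f \<xi>)"

definition f_I :: "(real \<Rightarrow> complex) \<Rightarrow> int \<times> int \<Rightarrow> real \<Rightarrow> complex" where
  "f_I \<psi> I x = complex_of_real (sqrt (dlen I)) * Dop (psi_I \<psi> I) x"

definition poisson_ext :: "(real \<Rightarrow> complex) \<Rightarrow> complex \<Rightarrow> complex" where
  "poisson_ext f z = (LINT t|lborel. f t * complex_of_real (1 / pi * Im z / ((Re z - t)\<^sup>2 + (Im z)\<^sup>2)))"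

definition upper_half_plane :: "complex set" where
  "upper_half_plane = {z. 0 < Im z}"

end

theory Submission
  imports Defs "HOL-Probability.Probability"
begin

text \<open>
  Write \<open>f_I\<close> as the inverse Fourier transform of \<open>a_I(\<xi>) = |I|^(1/2) 4\<pi>|\<xi>| \<psi>_I^(\<xi>)\<close>.
  Poisson extension to height \<open>y\<close> multiplies the Fourier transform by \<open>exp(-2\<pi>y|\<xi>|)\<close>, so by
  Parseval on each horizontal line the \<open>x\<close>-integral of \<open>f_I cnj(f_J)\<close> at height \<open>y\<close> equals
  \<open>\<integral> a_I cnj(a_J) exp(-4\<pi>|\<xi>|y) d\<xi>\<close>. Integrating against \<open>y dy\<close> produces \<open>(4\<pi>|\<xi>|)^-2\<close>, which
  cancels the symbol of \<open>D\<close> twice and leaves \<open>(|I||J|)^(1/2) \<langle>\<psi>_I^, \<psi>_J^\<rangle> = (|I||J|)^(1/2) \<langle>\<psi>_I, \<psi>_J\<rangle>\<close>,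
  which is \<open>|I| \<delta>_IJ\<close> by orthonormality. The same computation with absolute values justifies
  Fubini. Fourier inversion, Plancherel and Parseval are obtained for bounded continuous
  integrable functions by Gaussian summability.
\<close>

section \<open>Gaussians\<close>

lemma integrable_std_normal_cis:
  "integrable lborel (\<lambda>x. complex_of_real (std_normal_density x) * cis (t * x))"
proof -
  have "integrable lborel (\<lambda>x. complex_of_real (std_normal_density x))"
    by (rule integrable_of_real) simp
  then show ?thesis
    by (rule Bochner_Integration.integrable_bound)
      (auto simp: norm_mult norm_divide normal_density_def
        intro!: borel_measurable_continuous_onI continuous_intros)
qed

lemma integral_std_normal_cis:
  "(LINT x|lborel. complex_of_real (std_normal_density x) * cis (t * x))
     = complex_of_real (exp (- (t^2) / 2))"
proof -
  have "char std_normal_distribution t = complex_of_real (exp (- (t^2) / 2))"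
    by (simp add: char_std_normal_distribution)
  moreover have "char std_normal_distribution t
      = (LINT x|lborel. std_normal_density x *\<^sub>R exp (\<i> * complex_of_real (t * x)))"
    unfolding char_def by (subst integral_density) (simp_all add: normal_density_nonneg)
  ultimately show ?thesis by (simp add: cis_conv_exp scaleR_conv_of_real mult.commute)
qed

lemma gaussian_cis:
  fixes a \<xi> :: real
  assumes a: "a > 0"
  shows "integrable lborel (\<lambda>x. complex_of_real (exp (-pi*a*x^2)) * cis (2*pi*x*\<xi>))"
    and "(LINT x|lborel. complex_of_real (exp (-pi*a*x^2)) * cis (2*pi*x*\<xi>))
           = complex_of_real (exp (-pi*\<xi>^2/a) / sqrt a)"
proof -
  define c where "c = sqrt (2*pi*a)"
  have c: "c > 0" using a by (simp add: c_def)
  define t where "t = 2*pi*\<xi>/c"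
  \<comment> \<open>substituting \<open>x = c y\<close> turns the standard normal characteristic function into our integral\<close>
  have subst: "complex_of_real (std_normal_density (0 + c * y)) * cis (t * (0 + c*y))
     = complex_of_real (1 / sqrt (2*pi)) * (complex_of_real (exp (-pi*a*y^2)) * cis (2*pi*y*\<xi>))" for y
  proof -
    have e1: "(0 + c*y)^2/2 = pi*a*y^2" using a by (simp add: c_def power_mult_distrib)
    have e2: "t*(0 + c*y) = 2*pi*y*\<xi>" using c by (simp add: t_def)
    show ?thesis unfolding std_normal_density_def e2 minus_divide_left[symmetric] e1 by simp
  qed
  have "integrable lborel (\<lambda>y. complex_of_real (std_normal_density (0 + c * y)) * cis (t * (0 + c*y)))"
    using integrable_std_normal_cis[of t] c by (subst lborel_integrable_real_affine_iff) auto
  then have "integrable lborel (\<lambda>y. complex_of_real (sqrt (2*pi)) * (complex_of_real (1 / sqrt (2*pi))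
      * (complex_of_real (exp (-pi*a*y^2)) * cis (2*pi*y*\<xi>))))"
    unfolding subst by (rule integrable_mult_right)
  then show "integrable lborel (\<lambda>x. complex_of_real (exp (-pi*a*x^2)) * cis (2*pi*x*\<xi>))"
    by (simp add: field_simps)
  have "complex_of_real (exp (- (t^2) / 2))
      = (LINT x|lborel. complex_of_real (std_normal_density x) * cis (t * x))"
    by (rule integral_std_normal_cis[symmetric])
  also have "\<dots> = c *\<^sub>R (LINT y|lborel. complex_of_real (std_normal_density (0 + c * y)) * cis (t * (0 + c*y)))"
    using c by (subst lborel_integral_real_affine[where c=c and t=0]) auto
  also have "\<dots> = c *\<^sub>R (complex_of_real (1 / sqrt (2*pi))
      * (LINT y|lborel. complex_of_real (exp (-pi*a*y^2)) * cis (2*pi*y*\<xi>)))"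
    by (simp only: subst integral_mult_right_zero)
  finally have "(LINT y|lborel. complex_of_real (exp (-pi*a*y^2)) * cis (2*pi*y*\<xi>))
      = complex_of_real (exp (- (t^2/2)) * (sqrt (2*pi) / c))"
    using c by (simp add: scaleR_conv_of_real field_simps)
  also have "t^2/2 = pi*\<xi>^2/a"
    using a by (simp add: t_def c_def power_divide power_mult_distrib field_simps power2_eq_square)
  also have "sqrt (2*pi) / c = 1 / sqrt a"
    using a by (simp add: c_def real_sqrt_mult field_simps)
  finally show "(LINT x|lborel. complex_of_real (exp (-pi*a*x^2)) * cis (2*pi*x*\<xi>))
      = complex_of_real (exp (-pi*\<xi>^2/a) / sqrt a)"
    by simp
qed

lemma integrable_gaussian: "a > 0 \<Longrightarrow> integrable lborel (\<lambda>x. exp (-pi*a*x^2))"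
  using gaussian_cis(1)[of a 0] by (simp add: complex_of_real_integrable_eq)

lemma integral_gaussian: "a > 0 \<Longrightarrow> (LINT x|lborel. exp (-pi*a*x^2)) = 1 / sqrt a"
proof -
  assume "a > 0"
  then have "complex_of_real (LINT x|lborel. exp (-pi*a*x^2)) = complex_of_real (1 / sqrt a)"
    using gaussian_cis(2)[of a 0] by (simp only: integral_complex_of_real) simp
  then show ?thesis by (simp only: of_real_eq_iff)
qed

definition gauss_kernel :: "real \<Rightarrow> real \<Rightarrow> real" where
  "gauss_kernel \<epsilon> u = exp (-pi*u^2/\<epsilon>) / sqrt \<epsilon>"

lemma integral_gaussian_cis_eq_gauss_kernel:
  "\<epsilon> > 0 \<Longrightarrow> (LINT x|lborel. complex_of_real (exp (-pi*\<epsilon>*x^2)) * cis (2*pi*x*\<xi>))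
     = complex_of_real (gauss_kernel \<epsilon> \<xi>)"
  using gaussian_cis(2)[of \<epsilon> \<xi>] by (simp add: gauss_kernel_def)

lemma gauss_kernel_measurable [measurable]: "gauss_kernel \<epsilon> \<in> borel_measurable borel"
  unfolding gauss_kernel_def[abs_def] by measurable

lemma gauss_kernel_nonneg: "\<epsilon> > 0 \<Longrightarrow> gauss_kernel \<epsilon> u \<ge> 0"
  by (simp add: gauss_kernel_def)

lemma gauss_kernel_unit_mass:
  assumes e: "\<epsilon> > 0"
  shows "integrable lborel (\<lambda>\<xi>. gauss_kernel \<epsilon> (\<xi> - \<eta>))"
    and "(LINT \<xi>|lborel. gauss_kernel \<epsilon> (\<xi> - \<eta>)) = 1"
proof -
  have gk: "gauss_kernel \<epsilon> = (\<lambda>x. exp (-pi*(1/\<epsilon>)*x^2) / sqrt \<epsilon>)"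
    by (auto simp: gauss_kernel_def)
  have i: "integrable lborel (gauss_kernel \<epsilon>)"
    unfolding gk using integrable_gaussian[of "1/\<epsilon>"] e by simp
  have v: "(LINT x|lborel. gauss_kernel \<epsilon> x) = 1"
    unfolding gk using integral_gaussian[of "1/\<epsilon>"] e by (simp add: real_sqrt_divide)
  show "integrable lborel (\<lambda>\<xi>. gauss_kernel \<epsilon> (\<xi> - \<eta>))"
    using lborel_integrable_real_affine[OF i, of 1 "-\<eta>"] by simp
  show "(LINT \<xi>|lborel. gauss_kernel \<epsilon> (\<xi> - \<eta>)) = 1"
    using lborel_integral_real_affine[of 1 "gauss_kernel \<epsilon>" "-\<eta>"] v by simp
qed

section \<open>Fourier transforms of integrable functions\<close>

lemma cis_measurable [measurable]: "cis \<in> borel_measurable borel"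
  by (intro borel_measurable_continuous_onI continuous_intros)

lemma cnj_measurable [measurable]: "cnj \<in> borel_measurable borel"
  by (intro borel_measurable_continuous_onI continuous_intros)

lemma inv_fourier_measurable [measurable]:
  assumes [measurable]: "F \<in> borel_measurable borel"
  shows "inv_fourier F \<in> borel_measurable borel"
  unfolding inv_fourier_def[abs_def] by measurable

lemma fourier_measurable [measurable]:
  assumes [measurable]: "f \<in> borel_measurable borel"
  shows "fourier f \<in> borel_measurable borel"
  unfolding fourier_def[abs_def] by measurable

lemma fourier_eq_inv_fourier: "fourier f \<xi> = inv_fourier f (-\<xi>)"
  unfolding fourier_def inv_fourier_def by (simp add: mult_ac)

lemma norm_inv_fourier_le:
  "integrable lborel F \<Longrightarrow> norm (inv_fourier F x) \<le> (LINT \<xi>|lborel. norm (F \<xi>))"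
  unfolding inv_fourier_def by (rule order_trans[OF integral_norm_bound]) (simp add: norm_mult)

lemma isCont_inv_fourier:
  fixes F :: "real \<Rightarrow> complex"
  assumes F: "integrable lborel F"
  shows "isCont (inv_fourier F) a"
proof (rule continuous_at_sequentiallyI)
  have [measurable]: "F \<in> borel_measurable borel" using F by (simp add: borel_measurable_integrable)
  fix u assume u: "u \<longlonglongrightarrow> a"
  show "(\<lambda>n. inv_fourier F (u n)) \<longlonglongrightarrow> inv_fourier F a"
    unfolding inv_fourier_def
  proof (rule integral_dominated_convergence[where w="\<lambda>\<xi>. norm (F \<xi>)"])
    show "AE \<xi> in lborel. (\<lambda>n. F \<xi> * cis (2*pi*u n*\<xi>)) \<longlonglongrightarrow> F \<xi> * cis (2*pi*a*\<xi>)"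
      using u by (intro AE_I2 tendsto_intros)
  qed (use F in \<open>auto simp: norm_mult\<close>)
qed

lemma isCont_fourier: "integrable lborel f \<Longrightarrow> isCont (fourier f) a"
  unfolding fourier_eq_inv_fourier[abs_def]
  by (rule isCont_o2[OF _ isCont_inv_fourier]) (intro continuous_intros)

lemma integral_swap_bounded_kernel:
  fixes f g :: "real \<Rightarrow> complex" and k :: "real \<times> real \<Rightarrow> complex"
  assumes f: "integrable lborel f" and g: "integrable lborel g"
    and k[measurable]: "k \<in> borel_measurable borel" and k_le: "\<And>p. norm (k p) \<le> 1"
  shows "(LINT x|lborel. g x * (LINT \<xi>|lborel. f \<xi> * k (x,\<xi>)))
       = (LINT \<xi>|lborel. f \<xi> * (LINT x|lborel. g x * k (x,\<xi>)))"
proof -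
  have [measurable]: "f \<in> borel_measurable borel" "g \<in> borel_measurable borel"
    using f g by (auto simp: borel_measurable_integrable)
  have fk: "integrable lborel (\<lambda>\<xi>. f \<xi> * k (x,\<xi>))" for x
    by (rule Bochner_Integration.integrable_bound[OF f]) (auto simp: norm_mult intro!: mult_left_le[OF k_le])
  have inner: "integrable lborel (\<lambda>\<xi>. g x * (f \<xi> * k (x,\<xi>)))" for x
    using fk[of x] by simp
  have "integrable lborel (\<lambda>x. LINT \<xi>|lborel. norm (g x * (f \<xi> * k (x,\<xi>))))"
  proof (rule Bochner_Integration.integrable_bound)
    show "integrable lborel (\<lambda>x. norm (g x) * (LINT \<xi>|lborel. norm (f \<xi>)))"
      using g by simp
    show "AE x in lborel. norm (LINT \<xi>|lborel. norm (g x * (f \<xi> * k (x,\<xi>))))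
        \<le> norm (norm (g x) * (LINT \<xi>|lborel. norm (f \<xi>)))"
    proof (rule AE_I2)
      fix x
      have "(LINT \<xi>|lborel. norm (g x * (f \<xi> * k (x,\<xi>)))) \<le> (LINT \<xi>|lborel. norm (g x) * norm (f \<xi>))"
        using f fk[of x]
        by (intro integral_mono integrable_norm integrable_mult_right)
          (auto simp: norm_mult intro!: mult_left_mono mult_left_le[OF k_le])
      then show "norm (LINT \<xi>|lborel. norm (g x * (f \<xi> * k (x,\<xi>))))
          \<le> norm (norm (g x) * (LINT \<xi>|lborel. norm (f \<xi>)))"
        by (simp add: integral_nonneg_AE)
    qed
  qed simp
  then have "integrable (lborel \<Otimes>\<^sub>M lborel) (\<lambda>(x,\<xi>). g x * (f \<xi> * k (x,\<xi>)))"
    using inner by (intro lborel_pair.Fubini_integrable) auto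
  then have "(LINT x|lborel. LINT \<xi>|lborel. g x * (f \<xi> * k (x,\<xi>)))
      = (LINT \<xi>|lborel. LINT x|lborel. g x * (f \<xi> * k (x,\<xi>)))"
    using lborel_pair.Fubini_integral[of "\<lambda>x \<xi>. g x * (f \<xi> * k (x,\<xi>))"] by simp
  then show ?thesis
    by (simp flip: integral_mult_right_zero add: mult_ac)
qed

section \<open>Gaussian summability: inversion and Parseval\<close>

definition bounded_continuous_integrable :: "(real \<Rightarrow> complex) \<Rightarrow> bool" where
  "bounded_continuous_integrable F \<longleftrightarrow>
     integrable lborel F \<and> (\<forall>x. isCont F x) \<and> (\<exists>M. \<forall>x. norm (F x) \<le> M)"

lemma bounded_continuous_integrableD:
  assumes "bounded_continuous_integrable F"
  shows "integrable lborel F" and "isCont F x" and "\<exists>M. \<forall>x. norm (F x) \<le> M"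
    and "F \<in> borel_measurable borel"
  using assms by (auto simp: bounded_continuous_integrable_def borel_measurable_integrable)

lemma bounded_continuous_integrableI:
  assumes "integrable lborel F" and "\<And>x. isCont F x" and "\<And>x. norm (F x) \<le> M"
  shows "bounded_continuous_integrable F"
  using assms by (auto simp: bounded_continuous_integrable_def)

lemma damped_fourier_inv_fourier:
  fixes F :: "real \<Rightarrow> complex"
  assumes F: "integrable lborel F" and e: "\<epsilon> > 0"
  shows "(LINT x|lborel. inv_fourier F x * complex_of_real (exp (-pi*\<epsilon>*x^2)) * cis (-2*pi*x*\<eta>))
       = (LINT \<xi>|lborel. F \<xi> * complex_of_real (gauss_kernel \<epsilon> (\<xi> - \<eta>)))"
proof -
  let ?g = "\<lambda>x. complex_of_real (exp (-pi*\<epsilon>*x^2))"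
  let ?k = "\<lambda>p. cis (2*pi*fst p*(snd p - \<eta>))"
  have gi: "integrable lborel ?g"
    using integrable_gaussian[OF e] by (simp add: complex_of_real_integrable_eq)
  have pointwise: "inv_fourier F x * ?g x * cis (-2*pi*x*\<eta>) = ?g x * (LINT \<xi>|lborel. F \<xi> * ?k (x,\<xi>))" for x
  proof -
    have "inv_fourier F x * cis (-2*pi*x*\<eta>) = (LINT \<xi>|lborel. F \<xi> * cis (2*pi*x*\<xi>) * cis (-2*pi*x*\<eta>))"
      unfolding inv_fourier_def by simp
    also have "\<dots> = (LINT \<xi>|lborel. F \<xi> * ?k (x,\<xi>))"
      by (intro Bochner_Integration.integral_cong refl) (simp add: mult.assoc cis_mult algebra_simps)
    finally show ?thesis by (simp add: mult_ac)
  qed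
  have "(LINT x|lborel. inv_fourier F x * ?g x * cis (-2*pi*x*\<eta>))
      = (LINT x|lborel. ?g x * (LINT \<xi>|lborel. F \<xi> * ?k (x,\<xi>)))"
    by (simp only: pointwise)
  also have "\<dots> = (LINT \<xi>|lborel. F \<xi> * (LINT x|lborel. ?g x * ?k (x,\<xi>)))"
    by (rule integral_swap_bounded_kernel[OF F gi])
      (auto intro!: borel_measurable_continuous_onI continuous_intros)
  also have "\<dots> = (LINT \<xi>|lborel. F \<xi> * complex_of_real (gauss_kernel \<epsilon> (\<xi> - \<eta>)))"
    using integral_gaussian_cis_eq_gauss_kernel[OF e] by simp
  finally show ?thesis .
qed

lemma gauss_kernel_approx_identity:
  fixes G :: "real \<Rightarrow> complex" and \<epsilon> :: "nat \<Rightarrow> real"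
  assumes G[measurable]: "G \<in> borel_measurable borel" and G_le: "\<And>x. norm (G x) \<le> M"
    and cont: "isCont G \<xi>\<^sub>0" and pos: "\<And>n. \<epsilon> n > 0" and lim: "\<epsilon> \<longlonglongrightarrow> 0"
  shows "(\<lambda>n. LINT \<eta>|lborel. G \<eta> * complex_of_real (gauss_kernel (\<epsilon> n) (\<eta> - \<xi>\<^sub>0))) \<longlonglongrightarrow> G \<xi>\<^sub>0"
proof -
  define r where "r n = sqrt (\<epsilon> n)" for n
  have r: "r n > 0" for n using pos by (simp add: r_def)
  have rescale: "r n * gauss_kernel (\<epsilon> n) (r n * v) = exp (-pi * v^2)" for n v
    using pos[of n] by (simp add: r_def gauss_kernel_def power_mult_distrib)
  have "(LINT \<eta>|lborel. G \<eta> * complex_of_real (gauss_kernel (\<epsilon> n) (\<eta> - \<xi>\<^sub>0)))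
      = (LINT v|lborel. G (\<xi>\<^sub>0 + r n * v) * complex_of_real (exp (-pi * v^2)))" for n
  proof -
    have "(LINT \<eta>|lborel. G \<eta> * complex_of_real (gauss_kernel (\<epsilon> n) (\<eta> - \<xi>\<^sub>0)))
        = r n *\<^sub>R (LINT v|lborel. G (\<xi>\<^sub>0 + r n * v) * complex_of_real (gauss_kernel (\<epsilon> n) (r n * v)))"
      using r[of n] by (subst lborel_integral_real_affine[where c="r n" and t=\<xi>\<^sub>0]) auto
    also have "\<dots> = (LINT v|lborel. G (\<xi>\<^sub>0 + r n * v) * complex_of_real (exp (-pi * v^2)))"
    proof -
      have "complex_of_real (r n) * (G (\<xi>\<^sub>0 + r n * v) * complex_of_real (gauss_kernel (\<epsilon> n) (r n * v)))
          = G (\<xi>\<^sub>0 + r n * v) * complex_of_real (exp (-pi * v^2))" for v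
        using rescale[of n v] by (metis mult.left_commute of_real_mult)
      then show ?thesis
        by (simp only: scaleR_conv_of_real integral_mult_right_zero[symmetric])
    qed
    finally show ?thesis .
  qed
  moreover have "(\<lambda>n. LINT v|lborel. G (\<xi>\<^sub>0 + r n * v) * complex_of_real (exp (-pi * v^2)))
      \<longlonglongrightarrow> (LINT v|lborel. G \<xi>\<^sub>0 * complex_of_real (exp (-pi * v^2)))"
  proof (rule integral_dominated_convergence[where w="\<lambda>v. M * exp (-pi * v^2)"])
    show "integrable lborel (\<lambda>v. M * exp (-pi * v^2))"
      using integrable_gaussian[of 1] by simp
    have "r \<longlonglongrightarrow> 0"
      unfolding r_def using tendsto_real_sqrt[OF lim] by simp
    then have "(\<lambda>n. \<xi>\<^sub>0 + r n * v) \<longlonglongrightarrow> \<xi>\<^sub>0 + 0 * v" for v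
      by (intro tendsto_intros)
    then have "(\<lambda>n. G (\<xi>\<^sub>0 + r n * v)) \<longlonglongrightarrow> G \<xi>\<^sub>0" for v
      by (intro isCont_tendsto_compose[OF cont]) simp
    then show "AE v in lborel. (\<lambda>n. G (\<xi>\<^sub>0 + r n * v) * complex_of_real (exp (-pi * v^2)))
        \<longlonglongrightarrow> G \<xi>\<^sub>0 * complex_of_real (exp (-pi * v^2))"
      by (intro AE_I2 tendsto_mult_right)
    show "AE v in lborel. norm (G (\<xi>\<^sub>0 + r n * v) * complex_of_real (exp (-pi * v^2))) \<le> M * exp (-pi * v^2)" for n
      by (rule AE_I2) (simp add: norm_mult mult_right_mono G_le)
  qed simp_all
  moreover have "(LINT v|lborel. exp (-pi * v^2)) = 1"
    using integral_gaussian[of 1] by simp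
  ultimately show ?thesis by simp
qed

lemma damping_tendsto:
  "(\<lambda>n. complex_of_real (exp (-pi * inverse (real (Suc n)) * x^2))) \<longlonglongrightarrow> 1"
proof -
  have "(\<lambda>n. exp (-pi * inverse (real (Suc n)) * x^2)) \<longlonglongrightarrow> exp (-pi * 0 * x^2)"
    by (intro tendsto_intros LIMSEQ_inverse_real_of_nat)
  then show ?thesis
    using tendsto_of_real by fastforce
qed

lemma fourier_inv_fourier:
  fixes F :: "real \<Rightarrow> complex"
  assumes F: "bounded_continuous_integrable F" and iF: "integrable lborel (inv_fourier F)"
  shows "fourier (inv_fourier F) \<xi> = F \<xi>"
proof (rule LIMSEQ_unique)
  let ?\<epsilon> = "\<lambda>n. inverse (real (Suc n))"
  let ?S = "\<lambda>n. LINT x|lborel. inv_fourier F x * complex_of_real (exp (-pi*?\<epsilon> n*x^2)) * cis (-2*pi*x*\<xi>)"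
  obtain M where M: "\<And>x. norm (F x) \<le> M"
    using bounded_continuous_integrableD(3)[OF F] by blast
  have "?S n = (LINT \<eta>|lborel. F \<eta> * complex_of_real (gauss_kernel (?\<epsilon> n) (\<eta> - \<xi>)))" for n
    by (rule damped_fourier_inv_fourier[OF bounded_continuous_integrableD(1)[OF F]]) simp
  moreover have "(\<lambda>n. LINT \<eta>|lborel. F \<eta> * complex_of_real (gauss_kernel (?\<epsilon> n) (\<eta> - \<xi>))) \<longlonglongrightarrow> F \<xi>"
    by (rule gauss_kernel_approx_identity[OF bounded_continuous_integrableD(4)[OF F] M
          bounded_continuous_integrableD(2)[OF F]])
      (use LIMSEQ_inverse_real_of_nat in simp_all)
  ultimately show "?S \<longlonglongrightarrow> F \<xi>"
    by simp
  show "?S \<longlonglongrightarrow> fourier (inv_fourier F) \<xi>"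
    unfolding fourier_def
  proof (rule integral_dominated_convergence[where w="\<lambda>x. norm (inv_fourier F x)"])
    show "AE x in lborel. (\<lambda>n. inv_fourier F x * complex_of_real (exp (-pi*?\<epsilon> n*x^2)) * cis (-2*pi*x*\<xi>))
        \<longlonglongrightarrow> inv_fourier F x * cis (-2*pi*x*\<xi>)"
      using tendsto_mult[OF tendsto_mult[OF tendsto_const damping_tendsto] tendsto_const]
      by (intro AE_I2) simp
    show "AE x in lborel. norm (inv_fourier F x * complex_of_real (exp (-pi*?\<epsilon> n*x^2)) * cis (-2*pi*x*\<xi>))
        \<le> norm (inv_fourier F x)" for n
      by (intro AE_I2) (simp add: norm_mult mult_left_le)
  qed (use iF bounded_continuous_integrableD(4)[OF F] in simp_all)
qed

lemma damped_inner_inv_fourier: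
  fixes F G :: "real \<Rightarrow> complex"
  assumes F: "integrable lborel F" and G: "integrable lborel G" and e: "\<epsilon> > 0"
  shows "(LINT x|lborel. inv_fourier F x * complex_of_real (exp (-pi*\<epsilon>*x^2)) * cnj (inv_fourier G x))
       = (LINT \<eta>|lborel. cnj (G \<eta>) * (LINT \<xi>|lborel. F \<xi> * complex_of_real (gauss_kernel \<epsilon> (\<xi> - \<eta>))))"
proof -
  have [measurable]: "F \<in> borel_measurable borel" "G \<in> borel_measurable borel"
    using F G by (auto simp: borel_measurable_integrable)
  let ?P = "\<lambda>x. inv_fourier F x * complex_of_real (exp (-pi*\<epsilon>*x^2))"
  let ?k = "\<lambda>p. cis (-2*pi*fst p * snd p)"
  have "integrable lborel (\<lambda>x. (LINT \<xi>|lborel. norm (F \<xi>)) * exp (-pi*\<epsilon>*x^2))"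
    using integrable_gaussian[OF e] by simp
  then have iP: "integrable lborel ?P"
    by (rule Bochner_Integration.integrable_bound)
      (use norm_inv_fourier_le[OF F] in \<open>auto intro!: AE_I2 simp: norm_mult mult_right_mono\<close>)
  have "cnj (inv_fourier G x) = (LINT \<eta>|lborel. cnj (G \<eta>) * ?k (x,\<eta>))" for x
    unfolding inv_fourier_def by (simp flip: Bochner_Integration.integral_cnj add: cis_cnj)
  then have "(LINT x|lborel. ?P x * cnj (inv_fourier G x))
      = (LINT x|lborel. ?P x * (LINT \<eta>|lborel. cnj (G \<eta>) * ?k (x,\<eta>)))"
    by (simp only:)
  also have "\<dots> = (LINT \<eta>|lborel. cnj (G \<eta>) * (LINT x|lborel. ?P x * ?k (x,\<eta>)))"
    by (rule integral_swap_bounded_kernel[OF _ iP])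
      (use G in \<open>auto intro!: borel_measurable_continuous_onI continuous_intros\<close>)
  also have "\<dots> = (LINT \<eta>|lborel. cnj (G \<eta>) * (LINT \<xi>|lborel. F \<xi> * complex_of_real (gauss_kernel \<epsilon> (\<xi> - \<eta>))))"
    using damped_fourier_inv_fourier[OF F e] by simp
  finally show ?thesis .
qed

lemma damped_inner_inv_fourier_tendsto:
  fixes F G :: "real \<Rightarrow> complex" and \<epsilon> :: "nat \<Rightarrow> real"
  assumes F: "bounded_continuous_integrable F" and G: "integrable lborel G"
    and pos: "\<And>n. \<epsilon> n > 0" and lim: "\<epsilon> \<longlonglongrightarrow> 0"
  shows "(\<lambda>n. LINT x|lborel. inv_fourier F x * complex_of_real (exp (-pi*\<epsilon> n*x^2)) * cnj (inv_fourier G x))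
     \<longlonglongrightarrow> (LINT \<eta>|lborel. F \<eta> * cnj (G \<eta>))"
proof -
  note F' = bounded_continuous_integrableD[OF F]
  have [measurable]: "F \<in> borel_measurable borel" "G \<in> borel_measurable borel"
    using F'(4) G by (auto simp: borel_measurable_integrable)
  obtain M where M: "\<And>x. norm (F x) \<le> M" using F'(3) by blast
  let ?smooth = "\<lambda>n \<eta>. LINT \<xi>|lborel. F \<xi> * complex_of_real (gauss_kernel (\<epsilon> n) (\<xi> - \<eta>))"
  have smooth_le: "norm (?smooth n \<eta>) \<le> M" for n \<eta>
  proof -
    have "M \<ge> 0" using M[of 0] norm_ge_zero order_trans by blast
    have "norm (?smooth n \<eta>) \<le> (LINT \<xi>|lborel. norm (F \<xi> * complex_of_real (gauss_kernel (\<epsilon> n) (\<xi> - \<eta>))))"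
      by (rule integral_norm_bound)
    also have "\<dots> \<le> (LINT \<xi>|lborel. M * gauss_kernel (\<epsilon> n) (\<xi> - \<eta>))"
      using gauss_kernel_unit_mass(1)[OF pos] gauss_kernel_nonneg[OF pos] \<open>M \<ge> 0\<close>
      by (intro integral_mono') (auto simp: norm_mult mult_right_mono M)
    finally show ?thesis using gauss_kernel_unit_mass(2)[OF pos] by simp
  qed
  have eq: "(LINT x|lborel. inv_fourier F x * complex_of_real (exp (-pi*\<epsilon> n*x^2)) * cnj (inv_fourier G x))
      = (LINT \<eta>|lborel. cnj (G \<eta>) * ?smooth n \<eta>)" for n
    by (rule damped_inner_inv_fourier[OF F'(1) G pos])
  have "(\<lambda>n. LINT \<eta>|lborel. cnj (G \<eta>) * ?smooth n \<eta>) \<longlonglongrightarrow> (LINT \<eta>|lborel. F \<eta> * cnj (G \<eta>))"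
  proof (rule integral_dominated_convergence[where w="\<lambda>\<eta>. M * norm (G \<eta>)"])
    show "AE \<eta> in lborel. (\<lambda>n. cnj (G \<eta>) * ?smooth n \<eta>) \<longlonglongrightarrow> F \<eta> * cnj (G \<eta>)"
    proof (rule AE_I2)
      fix \<eta>
      have "(\<lambda>n. cnj (G \<eta>) * ?smooth n \<eta>) \<longlonglongrightarrow> cnj (G \<eta>) * F \<eta>"
        by (intro tendsto_mult_left gauss_kernel_approx_identity[OF _ M F'(2) pos lim]) simp
      then show "(\<lambda>n. cnj (G \<eta>) * ?smooth n \<eta>) \<longlonglongrightarrow> F \<eta> * cnj (G \<eta>)"
        by (simp only: mult.commute)
    qed
    show "AE \<eta> in lborel. norm (cnj (G \<eta>) * ?smooth n \<eta>) \<le> M * norm (G \<eta>)" for n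
      using smooth_le by (intro AE_I2) (simp add: norm_mult mult.commute[of M] mult_left_mono)
  qed (use G in simp_all)
  then show ?thesis
    by (simp only: eq)
qed

lemma integrable_damped_norm_inv_fourier_sq:
  fixes F :: "real \<Rightarrow> complex"
  assumes F: "integrable lborel F" and e: "\<epsilon> > 0"
  shows "integrable lborel (\<lambda>x. (norm (inv_fourier F x))^2 * exp (-pi*\<epsilon>*x^2))"
proof -
  have [measurable]: "F \<in> borel_measurable borel" using F by (simp add: borel_measurable_integrable)
  have "integrable lborel (\<lambda>x. (LINT \<xi>|lborel. norm (F \<xi>))^2 * exp (-pi*\<epsilon>*x^2))"
    using integrable_gaussian[OF e] by simp
  then show ?thesis
    by (rule Bochner_Integration.integrable_bound)
      (use norm_inv_fourier_le[OF F] in \<open>auto intro!: AE_I2 mult_right_mono power_mono\<close>)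
qed

lemma damped_norm_inv_fourier_sq_tendsto:
  fixes F :: "real \<Rightarrow> complex" and \<epsilon> :: "nat \<Rightarrow> real"
  assumes F: "bounded_continuous_integrable F" and pos: "\<And>n. \<epsilon> n > 0" and lim: "\<epsilon> \<longlonglongrightarrow> 0"
  shows "(\<lambda>n. LINT x|lborel. (norm (inv_fourier F x))^2 * exp (-pi*\<epsilon> n*x^2))
     \<longlonglongrightarrow> (LINT \<xi>|lborel. (norm (F \<xi>))^2)"
proof -
  have "z * complex_of_real c * cnj z = complex_of_real ((norm z)^2 * c)" for z c
    by (simp add: complex_norm_square[symmetric] mult_ac)
  then have "(LINT x|lborel. inv_fourier F x * complex_of_real (exp (-pi*\<epsilon> n*x^2)) * cnj (inv_fourier F x))
      = complex_of_real (LINT x|lborel. (norm (inv_fourier F x))^2 * exp (-pi*\<epsilon> n*x^2))" for n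
    by (simp only: integral_complex_of_real)
  moreover have "(LINT \<xi>|lborel. F \<xi> * cnj (F \<xi>)) = complex_of_real (LINT \<xi>|lborel. (norm (F \<xi>))^2)"
    by (simp only: complex_norm_square[symmetric] integral_complex_of_real)
  ultimately have "(\<lambda>n. complex_of_real (LINT x|lborel. (norm (inv_fourier F x))^2 * exp (-pi*\<epsilon> n*x^2)))
      \<longlonglongrightarrow> complex_of_real (LINT \<xi>|lborel. (norm (F \<xi>))^2)"
    using damped_inner_inv_fourier_tendsto[OF F bounded_continuous_integrableD(1)[OF F] pos lim] by simp
  then show ?thesis
    using tendsto_Re by fastforce
qed

text \<open>Monotone convergence as the damping \<open>e^{-\<pi>x\<^sup>2/(n+1)}\<close> increases to \<open>1\<close>.\<close>

lemma plancherel_inv_fourier: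
  fixes F :: "real \<Rightarrow> complex"
  assumes F: "bounded_continuous_integrable F"
  shows "integrable lborel (\<lambda>x. (norm (inv_fourier F x))^2)"
    and "(LINT x|lborel. (norm (inv_fourier F x))^2) = (LINT \<xi>|lborel. (norm (F \<xi>))^2)"
proof -
  have [measurable]: "F \<in> borel_measurable borel" by (rule bounded_continuous_integrableD(4)[OF F])
  let ?\<epsilon> = "\<lambda>n. inverse (real (Suc n))"
  let ?q = "\<lambda>x. (norm (inv_fourier F x))^2"
  define B where "B = (LINT \<xi>|lborel. (norm (F \<xi>))^2)"
  have "(\<integral>\<^sup>+x. ennreal (?q x * exp (-pi*?\<epsilon> n*x^2)) \<partial>lborel)
      = ennreal (LINT x|lborel. ?q x * exp (-pi*?\<epsilon> n*x^2))" for n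
    by (rule nn_integral_eq_integral[OF integrable_damped_norm_inv_fourier_sq[OF
          bounded_continuous_integrableD(1)[OF F]]]) simp_all
  moreover have "(\<lambda>n. LINT x|lborel. ?q x * exp (-pi*?\<epsilon> n*x^2)) \<longlonglongrightarrow> B"
    unfolding B_def using LIMSEQ_inverse_real_of_nat by (intro damped_norm_inv_fourier_sq_tendsto[OF F]) simp_all
  ultimately have "(\<lambda>n. \<integral>\<^sup>+x. ennreal (?q x * exp (-pi*?\<epsilon> n*x^2)) \<partial>lborel) \<longlonglongrightarrow> ennreal B"
    by (simp add: tendsto_ennrealI)
  moreover have "(\<lambda>n. \<integral>\<^sup>+x. ennreal (?q x * exp (-pi*?\<epsilon> n*x^2)) \<partial>lborel)
      \<longlonglongrightarrow> (\<integral>\<^sup>+x. ennreal (?q x) \<partial>lborel)"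
  proof (rule nn_integral_LIMSEQ)
    have "exp (-pi*?\<epsilon> n*x^2) \<le> exp (-pi*?\<epsilon> (Suc n)*x^2)" for n x
      by (simp add: mult_right_mono field_simps)
    then show "incseq (\<lambda>n x. ennreal (?q x * exp (-pi*?\<epsilon> n*x^2)))"
      by (intro incseq_SucI le_funI ennreal_leI mult_left_mono) auto
    show "(\<lambda>n. ennreal (?q x * exp (-pi*?\<epsilon> n*x^2))) \<longlonglongrightarrow> ennreal (?q x)" for x
    proof -
      have "(\<lambda>n. ?q x * exp (-pi*?\<epsilon> n*x^2)) \<longlonglongrightarrow> ?q x * exp (-pi*0*x^2)"
        by (intro tendsto_intros LIMSEQ_inverse_real_of_nat)
      then show ?thesis by (intro tendsto_ennrealI) simp
    qed
  qed simp
  ultimately have nn: "(\<integral>\<^sup>+x. ennreal (?q x) \<partial>lborel) = ennreal B"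
    by (rule LIMSEQ_unique[rotated])
  show integrable: "integrable lborel ?q"
    by (rule integrableI_nn_integral_finite[OF _ _ nn]) auto
  have "B \<ge> 0" unfolding B_def by (intro integral_nonneg_AE) auto
  then show "(LINT x|lborel. ?q x) = (LINT \<xi>|lborel. (norm (F \<xi>))^2)"
    using nn nn_integral_eq_integral[OF integrable] by (simp add: B_def)
qed

lemma parseval_inv_fourier:
  fixes F G :: "real \<Rightarrow> complex"
  assumes F: "bounded_continuous_integrable F" and G: "bounded_continuous_integrable G"
  shows "integrable lborel (\<lambda>x. inv_fourier F x * cnj (inv_fourier G x))"
    and "(LINT x|lborel. inv_fourier F x * cnj (inv_fourier G x)) = (LINT \<xi>|lborel. F \<xi> * cnj (G \<xi>))"
proof -
  have [measurable]: "F \<in> borel_measurable borel" "G \<in> borel_measurable borel"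
    using F G by (auto dest: bounded_continuous_integrableD(4))
  let ?\<epsilon> = "\<lambda>n. inverse (real (Suc n))"
  let ?w = "\<lambda>x. (norm (inv_fourier F x))^2 + (norm (inv_fourier G x))^2"
  have iw: "integrable lborel ?w"
    using plancherel_inv_fourier(1)[OF F] plancherel_inv_fourier(1)[OF G] by simp
  have le_w: "norm (inv_fourier F x * cnj (inv_fourier G x) * c) \<le> ?w x" if "norm c \<le> 1" for x c
  proof -
    have "norm (inv_fourier F x * cnj (inv_fourier G x) * c) \<le> norm (inv_fourier F x) * norm (inv_fourier G x)"
      using that by (simp add: norm_mult mult_left_le)
    also have "\<dots> \<le> ?w x"
      using sum_squares_bound[of "norm (inv_fourier F x)" "norm (inv_fourier G x)"]
        mult_nonneg_nonneg[OF norm_ge_zero norm_ge_zero, of "inv_fourier F x" "inv_fourier G x"]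
      by linarith
    finally show ?thesis .
  qed
  show "integrable lborel (\<lambda>x. inv_fourier F x * cnj (inv_fourier G x))"
    by (rule Bochner_Integration.integrable_bound[OF iw]) (auto intro!: AE_I2 order_trans[OF _ le_w[of 1]])
  have "(\<lambda>n. LINT x|lborel. inv_fourier F x * complex_of_real (exp (-pi*?\<epsilon> n*x^2)) * cnj (inv_fourier G x))
      \<longlonglongrightarrow> (LINT x|lborel. inv_fourier F x * cnj (inv_fourier G x))"
  proof (rule integral_dominated_convergence[where w="?w"])
    show "AE x in lborel. (\<lambda>n. inv_fourier F x * complex_of_real (exp (-pi*?\<epsilon> n*x^2)) * cnj (inv_fourier G x))
        \<longlonglongrightarrow> inv_fourier F x * cnj (inv_fourier G x)"
      using tendsto_mult[OF tendsto_mult[OF tendsto_const damping_tendsto] tendsto_const]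
      by (intro AE_I2) simp
    show "AE x in lborel. norm (inv_fourier F x * complex_of_real (exp (-pi*?\<epsilon> n*x^2)) * cnj (inv_fourier G x))
        \<le> ?w x" for n
      using le_w[of "complex_of_real (exp (-pi*?\<epsilon> n*x^2))" for x]
      by (intro AE_I2) (simp add: mult_ac)
  qed (use iw in simp_all)
  then show "(LINT x|lborel. inv_fourier F x * cnj (inv_fourier G x)) = (LINT \<xi>|lborel. F \<xi> * cnj (G \<xi>))"
    using damped_inner_inv_fourier_tendsto[OF F bounded_continuous_integrableD(1)[OF G], of ?\<epsilon>]
      LIMSEQ_inverse_real_of_nat
    by (auto intro: LIMSEQ_unique)
qed

lemma parseval_fourier:
  fixes F G :: "real \<Rightarrow> complex"
  assumes F: "bounded_continuous_integrable F" and G: "bounded_continuous_integrable G"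
  shows "(LINT \<xi>|lborel. fourier F \<xi> * cnj (fourier G \<xi>)) = (LINT x|lborel. F x * cnj (G x))"
proof -
  have "(LINT \<xi>|lborel. fourier F \<xi> * cnj (fourier G \<xi>))
      = (LINT \<xi>|lborel. inv_fourier F (0 + (-1) * \<xi>) * cnj (inv_fourier G (0 + (-1) * \<xi>)))"
    by (simp add: fourier_eq_inv_fourier)
  also have "\<dots> = (LINT \<xi>|lborel. inv_fourier F \<xi> * cnj (inv_fourier G \<xi>))"
    using lborel_integral_real_affine[of "-1" "\<lambda>\<xi>. inv_fourier F \<xi> * cnj (inv_fourier G \<xi>)" 0] by simp
  also have "\<dots> = (LINT x|lborel. F x * cnj (G x))"
    by (rule parseval_inv_fourier(2)[OF F G])
  finally show ?thesis .
qed

lemma integrable_norm_fourier_sq: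
  assumes "bounded_continuous_integrable F"
  shows "integrable lborel (\<lambda>\<xi>. (norm (fourier F \<xi>))^2)"
proof -
  have "integrable lborel (\<lambda>\<xi>. (norm (inv_fourier F (0 + (-1) * \<xi>)))^2)"
    by (rule lborel_integrable_real_affine[OF plancherel_inv_fourier(1)[OF assms]]) simp
  then show ?thesis by (simp add: fourier_eq_inv_fourier)
qed

section \<open>The Poisson kernel\<close>

lemma integral_odd_eq_0:
  fixes g :: "real \<Rightarrow> real"
  assumes "\<And>x. g (-x) = - g x"
  shows "(LINT x|lborel. g x) = 0"
proof -
  have "(LINT x|lborel. g x) = \<bar>-1\<bar> *\<^sub>R (LINT x|lborel. g (0 + (-1) * x))"
    by (rule lborel_integral_real_affine) simp
  then show ?thesis using assms by simp
qed

lemma integral_even_eq_twice_Ioi: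
  fixes g :: "real \<Rightarrow> real"
  assumes [measurable]: "g \<in> borel_measurable borel" and even: "\<And>x. g (-x) = g x"
    and si: "set_integrable lborel {0<..} g"
  shows "integrable lborel g" and "(LINT x|lborel. g x) = 2 * (LINT x:{0<..}|lborel. g x)"
proof -
  let ?h = "\<lambda>x. indicator {0<..} x * g x"
  have ih: "integrable lborel ?h" using si by (simp add: set_integrable_def)
  have ih': "integrable lborel (\<lambda>x. ?h (0 + (-1) * x))"
    by (rule lborel_integrable_real_affine[OF ih]) simp
  have ae: "AE x in lborel. g x = ?h x + ?h (0 + (-1) * x)"
    using AE_lborel_singleton[of 0] by eventually_elim (auto simp: even indicator_def)
  show "integrable lborel g"
    using ih ih' by (intro integrable_cong_AE_imp[OF _ _ ae[THEN AE_symmetric]]) auto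
  have "(LINT x|lborel. g x) = (LINT x|lborel. ?h x) + (LINT x|lborel. ?h (0 + (-1) * x))"
    using ih ih' by (simp add: integral_cong_AE[OF _ _ ae])
  also have "(LINT x|lborel. ?h (0 + (-1) * x)) = (LINT x|lborel. ?h x)"
    using lborel_integral_real_affine[of "-1" ?h 0] by simp
  finally show "(LINT x|lborel. g x) = 2 * (LINT x:{0<..}|lborel. g x)"
    by (simp add: set_lebesgue_integral_def)
qed

lemma exp_cos_Ioi:
  fixes c d :: real
  assumes c: "c > 0"
  shows "set_integrable lborel {0<..} (\<lambda>x. exp (-(x * c)) * cos (d * x))"
    and "(LINT x:{0<..}|lborel. exp (-(x * c)) * cos (d * x)) = c / (c^2 + d^2)"
proof -
  have cd: "c^2 + d^2 > 0" using c by (simp add: add_pos_nonneg)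
  show si: "set_integrable lborel {0<..} (\<lambda>x. exp (-(x * c)) * cos (d * x))"
  proof (rule set_integrable_bound[OF integrable_I0i_exp_mscale[OF c]])
    show "set_borel_measurable lborel {0<..} (\<lambda>x. exp (-(x * c)) * cos (d * x))"
      unfolding set_borel_measurable_def by measurable
  qed (auto simp: abs_mult mult_left_le)
  let ?F = "\<lambda>x. exp (-(x * c)) * (d * sin (d * x) - c * cos (d * x)) / (c^2 + d^2)"
  have "(LBINT x=0..\<infinity>. exp (-(x * c)) * cos (d * x)) = 0 - (- c / (c^2 + d^2))"
  proof (rule interval_integral_FTC_integrable)
    show "(?F has_vector_derivative exp (-(x * c)) * cos (d * x)) (at x)" for x
      using cd
      by (auto intro!: derivative_eq_intros
             simp: has_real_derivative_iff_has_vector_derivative[symmetric] power2_eq_square)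
         (simp_all add: field_simps)
    show "set_integrable lborel (einterval 0 \<infinity>) (\<lambda>x. exp (-(x * c)) * cos (d * x))"
      using si by (simp add: zero_ereal_def)
    show "((?F \<circ> real_of_ereal) \<longlongrightarrow> - c / (c^2 + d^2)) (at_right 0)"
      using c by (auto simp: zero_ereal_def ereal_tendsto_simps intro!: tendsto_eq_intros)
    have decay: "((\<lambda>t. exp (- (t * c))) \<longlongrightarrow> 0) at_top"
      using c
      by (auto intro!: exp_at_bot[THEN filterlim_compose] filterlim_tendsto_pos_mult_at_top filterlim_ident
             simp: filterlim_uminus_at_bot mult.commute[of _ c])
    have "((\<lambda>t. exp (- (t * c)) * ((d * sin (d * t) - c * cos (d * t)) / (c^2 + d^2))) \<longlongrightarrow> 0) at_top"
    proof (rule tendsto_0_le[OF decay, where K="(\<bar>d\<bar> + \<bar>c\<bar>) / (c^2 + d^2)"], rule always_eventually, rule allI)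
      fix t
      have "\<bar>d * sin (d * t) - c * cos (d * t)\<bar> \<le> \<bar>d * sin (d * t)\<bar> + \<bar>c * cos (d * t)\<bar>"
        by (rule abs_triangle_ineq4)
      also have "\<dots> \<le> \<bar>d\<bar> + \<bar>c\<bar>"
        by (intro add_mono) (simp_all add: abs_mult mult_left_le)
      finally have "\<bar>(d * sin (d * t) - c * cos (d * t)) / (c^2 + d^2)\<bar> \<le> (\<bar>d\<bar> + \<bar>c\<bar>) / (c^2 + d^2)"
        using cd by (simp add: divide_right_mono)
      then show "norm (exp (- (t * c)) * ((d * sin (d * t) - c * cos (d * t)) / (c^2 + d^2)))
          \<le> norm (exp (- (t * c))) * ((\<bar>d\<bar> + \<bar>c\<bar>) / (c^2 + d^2))"
        by (simp add: abs_mult mult_left_mono times_divide_eq_right[symmetric] del: times_divide_eq_right)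
    qed
    then show "((?F \<circ> real_of_ereal) \<longlongrightarrow> 0) (at_left \<infinity>)"
      unfolding ereal_tendsto_simps by (simp add: times_divide_eq_right)
  qed auto
  then show "(LINT x:{0<..}|lborel. exp (-(x * c)) * cos (d * x)) = c / (c^2 + d^2)"
    by (simp add: interval_lebesgue_integral_0_infty)
qed

definition poisson_kernel :: "real \<Rightarrow> real \<Rightarrow> real" where
  "poisson_kernel y s = y / (pi * (y^2 + s^2))"

definition poisson_multiplier :: "real \<Rightarrow> real \<Rightarrow> real" where
  "poisson_multiplier y \<eta> = exp (-2*pi*y*\<bar>\<eta>\<bar>)"

lemma poisson_multiplier_measurable [measurable]: "poisson_multiplier y \<in> borel_measurable borel"
  unfolding poisson_multiplier_def[abs_def] by measurable

lemma poisson_multiplier_nonneg: "0 \<le> poisson_multiplier y \<eta>"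
  by (simp add: poisson_multiplier_def)

lemma poisson_multiplier_le_1: "y \<ge> 0 \<Longrightarrow> poisson_multiplier y \<eta> \<le> 1"
  by (simp add: poisson_multiplier_def)

lemma isCont_poisson_multiplier: "isCont (poisson_multiplier y) x"
  unfolding poisson_multiplier_def[abs_def] by (intro continuous_intros)

lemma poisson_multiplier_pos: "\<eta> > 0 \<Longrightarrow> poisson_multiplier y \<eta> = exp (-(\<eta> * (2*pi*y)))"
  by (simp add: poisson_multiplier_def mult_ac)

lemma poisson_multiplier_sq: "(poisson_multiplier y \<xi>)^2 = exp (-((4*pi*\<bar>\<xi>\<bar>)*y))"
  by (simp add: poisson_multiplier_def power2_eq_square exp_add[symmetric] algebra_simps)

lemma poisson_multiplier_cos:
  assumes y: "y > 0"
  shows "integrable lborel (\<lambda>\<eta>. poisson_multiplier y \<eta> * cos (2*pi * s*\<eta>))"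
    and "(LINT \<eta>|lborel. poisson_multiplier y \<eta> * cos (2*pi * s*\<eta>)) = poisson_kernel y s"
proof -
  let ?c = "2*pi*y" and ?d = "2*pi * s"
  have c: "?c > 0" using y by simp
  have si: "set_integrable lborel {0<..} (\<lambda>\<eta>. poisson_multiplier y \<eta> * cos (2*pi * s*\<eta>))"
    using exp_cos_Ioi(1)[OF c, of ?d]
    by (rule set_integrable_cong[THEN iffD1, rotated -1]) (auto simp: poisson_multiplier_pos mult_ac)
  have even: "poisson_multiplier y (-x) * cos (2*pi * s*(-x)) = poisson_multiplier y x * cos (2*pi * s*x)" for x
    by (simp add: poisson_multiplier_def)
  show "integrable lborel (\<lambda>\<eta>. poisson_multiplier y \<eta> * cos (2*pi * s*\<eta>))"
    by (rule integral_even_eq_twice_Ioi(1)[OF _ even si]) measurable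
  have "(LINT \<eta>|lborel. poisson_multiplier y \<eta> * cos (2*pi * s*\<eta>))
      = 2 * (LINT \<eta>:{0<..}|lborel. poisson_multiplier y \<eta> * cos (2*pi * s*\<eta>))"
    by (rule integral_even_eq_twice_Ioi(2)[OF _ even si]) measurable
  also have "(LINT \<eta>:{0<..}|lborel. poisson_multiplier y \<eta> * cos (2*pi * s*\<eta>))
      = (LINT \<eta>:{0<..}|lborel. exp (-(\<eta> * ?c)) * cos (?d * \<eta>))"
    by (rule set_lebesgue_integral_cong) (auto simp: poisson_multiplier_pos mult_ac)
  also have "\<dots> = ?c / (?c^2 + ?d^2)" by (rule exp_cos_Ioi(2)[OF c])
  also have "2 * (?c / (?c^2 + ?d^2)) = poisson_kernel y s"
  proof -
    have "?c^2 + ?d^2 = (4*pi) * (pi*(y^2+s^2))"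
      by (simp add: power_mult_distrib algebra_simps power2_eq_square)
    then show ?thesis using y by (simp add: poisson_kernel_def)
  qed
  finally show "(LINT \<eta>|lborel. poisson_multiplier y \<eta> * cos (2*pi * s*\<eta>)) = poisson_kernel y s" .
qed

lemma integrable_poisson_multiplier:
  assumes y: "y > 0"
  shows "integrable lborel (poisson_multiplier y)"
proof (rule integral_even_eq_twice_Ioi(1))
  show "poisson_multiplier y (-x) = poisson_multiplier y x" for x
    by (simp add: poisson_multiplier_def)
  have "set_integrable lborel {0<..} (\<lambda>x. exp (-(x * (2*pi*y))))"
    using y by (intro integrable_I0i_exp_mscale) simp
  then show "set_integrable lborel {0<..} (poisson_multiplier y)"
    by (rule set_integrable_cong[THEN iffD1, rotated -1]) (auto simp: poisson_multiplier_pos)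
qed simp

lemma bounded_continuous_integrable_poisson_multiplier:
  assumes y: "y > 0"
  shows "bounded_continuous_integrable (\<lambda>\<eta>. complex_of_real (poisson_multiplier y \<eta>))"
proof (rule bounded_continuous_integrableI)
  show "integrable lborel (\<lambda>\<eta>. complex_of_real (poisson_multiplier y \<eta>))"
    using integrable_poisson_multiplier[OF y] by (simp add: complex_of_real_integrable_eq)
  show "isCont (\<lambda>\<eta>. complex_of_real (poisson_multiplier y \<eta>)) x" for x
    by (intro continuous_intros isCont_o2[OF isCont_poisson_multiplier])
  show "norm (complex_of_real (poisson_multiplier y x)) \<le> 1" for x
    using y poisson_multiplier_le_1[of y x] poisson_multiplier_nonneg[of y x] by simp
qed

lemma inv_fourier_poisson_multiplier:
  assumes y: "y > 0"
  shows "inv_fourier (\<lambda>\<eta>. complex_of_real (poisson_multiplier y \<eta>)) s = complex_of_real (poisson_kernel y s)"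
proof -
  let ?cos = "\<lambda>\<eta>. poisson_multiplier y \<eta> * cos (2*pi * s*\<eta>)"
  let ?sin = "\<lambda>\<eta>. poisson_multiplier y \<eta> * sin (2*pi * s*\<eta>)"
  have integrable_sin: "integrable lborel ?sin"
    by (rule Bochner_Integration.integrable_bound[OF integrable_poisson_multiplier[OF y]])
      (auto simp: abs_mult poisson_multiplier_nonneg mult_left_le)
  have "complex_of_real (poisson_multiplier y \<eta>) * cis (2*pi * s*\<eta>)
      = complex_of_real (?cos \<eta>) + \<i> * complex_of_real (?sin \<eta>)" for \<eta>
    by (simp add: cis.ctr Complex_eq algebra_simps)
  then have "inv_fourier (\<lambda>\<eta>. complex_of_real (poisson_multiplier y \<eta>)) s
      = (LINT \<eta>|lborel. complex_of_real (?cos \<eta>) + \<i> * complex_of_real (?sin \<eta>))"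
    unfolding inv_fourier_def by (simp only:)
  also have "\<dots> = complex_of_real (LINT \<eta>|lborel. ?cos \<eta>) + \<i> * complex_of_real (LINT \<eta>|lborel. ?sin \<eta>)"
  proof -
    have "integrable lborel (\<lambda>\<eta>. complex_of_real (?cos \<eta>))"
      using poisson_multiplier_cos(1)[OF y, of s] by (rule integrable_of_real)
    moreover have "integrable lborel (\<lambda>\<eta>. \<i> * complex_of_real (?sin \<eta>))"
      using integrable_sin by (intro integrable_mult_right integrable_of_real)
    ultimately show ?thesis
      by (simp only: Bochner_Integration.integral_add integral_complex_of_real integral_mult_right_zero)
  qed
  also have "(LINT \<eta>|lborel. ?sin \<eta>) = 0"
    by (rule integral_odd_eq_0) (simp add: poisson_multiplier_def)
  finally show ?thesis
    by (simp add: poisson_multiplier_cos(2)[OF y])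
qed

lemma integrable_poisson_kernel: "y > 0 \<Longrightarrow> integrable lborel (poisson_kernel y)"
proof -
  assume y: "y > 0"
  have "integrable lborel (\<lambda>x::real. inverse (1 + x^2))"
    using integrable_inverse_1_plus_square by (simp add: set_integrable_def)
  then have "integrable lborel (\<lambda>s. (1/(pi*y)) * inverse (1 + (0 + (1/y) * s)^2))"
    using y by (intro integrable_mult_right lborel_integrable_real_affine) simp_all
  also have "(\<lambda>s. (1/(pi*y)) * inverse (1 + (0 + (1/y) * s)^2)) = poisson_kernel y"
    using y by (auto simp: poisson_kernel_def field_simps power2_eq_square)
  finally show ?thesis .
qed

lemma fourier_poisson_kernel:
  assumes y: "y > 0"
  shows "fourier (\<lambda>s. complex_of_real (poisson_kernel y s)) \<xi> = complex_of_real (poisson_multiplier y \<xi>)"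
proof -
  have "(\<lambda>s. complex_of_real (poisson_kernel y s)) = inv_fourier (\<lambda>\<eta>. complex_of_real (poisson_multiplier y \<eta>))"
    using inv_fourier_poisson_multiplier[OF y] by auto
  moreover have "integrable lborel (\<lambda>s. complex_of_real (poisson_kernel y s))"
    using integrable_poisson_kernel[OF y] by (simp add: complex_of_real_integrable_eq)
  ultimately show ?thesis
    using fourier_inv_fourier[OF bounded_continuous_integrable_poisson_multiplier[OF y]] by simp
qed

lemma poisson_ext_inv_fourier:
  fixes a :: "real \<Rightarrow> complex"
  assumes a: "integrable lborel a" and y: "y > 0"
  shows "poisson_ext (inv_fourier a) (Complex x y)
       = inv_fourier (\<lambda>\<xi>. a \<xi> * complex_of_real (poisson_multiplier y \<xi>)) x"
proof -
  let ?g = "\<lambda>t. complex_of_real (poisson_kernel y (x - t))"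
  let ?k = "\<lambda>p. cis (2*pi*fst p * snd p)"
  have "integrable lborel (\<lambda>t. poisson_kernel y (x + (-1) * t))"
    by (rule lborel_integrable_real_affine[OF integrable_poisson_kernel[OF y]]) simp
  then have g: "integrable lborel ?g"
    by (simp add: complex_of_real_integrable_eq)
  have shifted: "(LINT t|lborel. ?g t * cis (2*pi*t*\<xi>))
      = cis (2*pi*x*\<xi>) * complex_of_real (poisson_multiplier y \<xi>)" for \<xi>
  proof -
    have "(LINT t|lborel. ?g t * cis (2*pi*t*\<xi>))
        = (LINT s|lborel. ?g (x + (-1) * s) * cis (2*pi*(x + (-1) * s)*\<xi>))"
      using lborel_integral_real_affine[of "-1" "\<lambda>t. ?g t * cis (2*pi*t*\<xi>)" x] by simp
    also have "\<dots> = (LINT s|lborel. cis (2*pi*x*\<xi>) * (complex_of_real (poisson_kernel y s) * cis (- 2 * pi * s * \<xi>)))"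
      by (simp add: cis_mult algebra_simps)
    also have "\<dots> = cis (2*pi*x*\<xi>) * complex_of_real (poisson_multiplier y \<xi>)"
      using fourier_poisson_kernel[OF y, of \<xi>] by (simp add: fourier_def)
    finally show ?thesis .
  qed
  have "poisson_ext (inv_fourier a) (Complex x y) = (LINT t|lborel. ?g t * (LINT \<xi>|lborel. a \<xi> * ?k (t,\<xi>)))"
    unfolding poisson_ext_def inv_fourier_def
    by (intro Bochner_Integration.integral_cong refl) (simp add: poisson_kernel_def mult.commute power2_commute)
  also have "\<dots> = (LINT \<xi>|lborel. a \<xi> * (LINT t|lborel. ?g t * ?k (t,\<xi>)))"
    by (rule integral_swap_bounded_kernel[OF a g]) (auto intro!: borel_measurable_continuous_onI continuous_intros)
  also have "\<dots> = inv_fourier (\<lambda>\<xi>. a \<xi> * complex_of_real (poisson_multiplier y \<xi>)) x"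
    unfolding inv_fourier_def using shifted by (simp add: mult_ac)
  finally show ?thesis .
qed

section \<open>Area integrals over the upper half plane\<close>

lemma measurable_Complex_pair: "(\<lambda>(x,y). Complex x y) \<in> (lborel \<Otimes>\<^sub>M lborel) \<rightarrow>\<^sub>M borel"
proof -
  have "(\<lambda>p. Complex (fst p) (snd p)) \<in> borel_measurable (borel :: (real \<times> real) measure)"
    by (intro borel_measurable_continuous_onI) (simp add: Complex_eq continuous_intros)
  then show ?thesis
    by (simp add: case_prod_beta' borel_prod[symmetric] cong: measurable_cong_sets)
qed

lemma lborel_complex_eq_distr_pair: "lborel = distr (lborel \<Otimes>\<^sub>M lborel) borel (\<lambda>(x,y). Complex x y)"
proof (rule lborel_eqI)
  fix l u :: complex
  assume le: "\<And>b. b \<in> Basis \<Longrightarrow> l \<bullet> b \<le> u \<bullet> b"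
  have le2: "Re l \<le> Re u" "Im l \<le> Im u" using le[of 1] le[of \<i>] by (auto simp: Basis_complex_def)
  have "(\<lambda>(x,y). Complex x y) -` box l u \<inter> space (lborel \<Otimes>\<^sub>M lborel) = {Re l<..<Re u} \<times> {Im l<..<Im u}"
    by (auto simp: box_def Basis_complex_def space_pair_measure)
  then have "emeasure (distr (lborel \<Otimes>\<^sub>M lborel) borel (\<lambda>(x,y). Complex x y)) (box l u)
      = emeasure (lborel \<Otimes>\<^sub>M lborel) ({Re l<..<Re u} \<times> {Im l<..<Im u})"
    by (subst emeasure_distr[OF measurable_Complex_pair]) simp_all
  also have "\<dots> = ennreal ((Re u - Re l) * (Im u - Im l))"
    using le2 by (simp add: lborel.emeasure_pair_measure_Times ennreal_mult)
  also have "(Re u - Re l) * (Im u - Im l) = (\<Prod>b\<in>Basis. (u - l) \<bullet> b)"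
    by (simp add: Basis_complex_def)
  finally show "emeasure (distr (lborel \<Otimes>\<^sub>M lborel) borel (\<lambda>(x,y). Complex x y)) (box l u)
      = (\<Prod>b\<in>Basis. (u - l) \<bullet> b)" .
qed simp

lemma measurable_Complex [measurable]:
  assumes [measurable]: "f \<in> borel_measurable M" "g \<in> borel_measurable M"
  shows "(\<lambda>x. Complex (f x) (g x)) \<in> borel_measurable M"
  unfolding Complex_eq by measurable

lemma lborel_pair_integrableI:
  fixes f :: "real \<times> real \<Rightarrow> 'a::{banach, second_countable_topology}"
  assumes [measurable]: "f \<in> borel_measurable (lborel \<Otimes>\<^sub>M lborel)"
    and "(\<integral>\<^sup>+ y. (\<integral>\<^sup>+ x. ennreal (norm (f (x, y))) \<partial>lborel) \<partial>lborel) < \<infinity>"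
  shows "integrable (lborel \<Otimes>\<^sub>M lborel) f"
  using assms(2) by (intro integrableI_bounded) (simp_all add: lborel_pair.nn_integral_snd[symmetric])

lemma upper_half_plane_sets [measurable]: "upper_half_plane \<in> sets borel"
  unfolding upper_half_plane_def by measurable

lemma set_integral_upper_half_plane:
  fixes H :: "complex \<Rightarrow> 'a::{banach, second_countable_topology}"
  assumes [measurable]: "H \<in> borel_measurable borel"
  shows "set_integrable lborel upper_half_plane H
           \<longleftrightarrow> integrable (lborel \<Otimes>\<^sub>M lborel) (\<lambda>(x,y). indicator {0<..} y *\<^sub>R H (Complex x y))"
    and "(LINT z:upper_half_plane|lborel. H z)
           = integral\<^sup>L (lborel \<Otimes>\<^sub>M lborel) (\<lambda>(x,y). indicator {0<..} y *\<^sub>R H (Complex x y))"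
proof -
  have indicator: "indicator upper_half_plane (Complex x y) = (indicator {0<..} y :: real)" for x y
    by (simp add: upper_half_plane_def indicator_def)
  show "set_integrable lborel upper_half_plane H
      \<longleftrightarrow> integrable (lborel \<Otimes>\<^sub>M lborel) (\<lambda>(x,y). indicator {0<..} y *\<^sub>R H (Complex x y))"
    unfolding set_integrable_def
    by (subst lborel_complex_eq_distr_pair, subst integrable_distr_eq[OF measurable_Complex_pair])
      (simp_all add: case_prod_beta' indicator)
  show "(LINT z:upper_half_plane|lborel. H z)
      = integral\<^sup>L (lborel \<Otimes>\<^sub>M lborel) (\<lambda>(x,y). indicator {0<..} y *\<^sub>R H (Complex x y))"
    unfolding set_lebesgue_integral_def
    by (subst lborel_complex_eq_distr_pair, subst integral_distr[OF measurable_Complex_pair])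
      (simp_all add: case_prod_beta' indicator)
qed

lemma integrable_norm_sq:
  assumes "bounded_continuous_integrable F"
  shows "integrable lborel (\<lambda>\<xi>. (norm (F \<xi>))^2)"
proof -
  note F = bounded_continuous_integrableD[OF assms]
  obtain M where M: "\<And>x. norm (F x) \<le> M" using F(3) by blast
  have "integrable lborel (\<lambda>\<xi>. M * norm (F \<xi>))" using F(1) by simp
  then show ?thesis
    by (rule Bochner_Integration.integrable_bound)
      (use F(4) M in \<open>auto intro!: AE_I2 order_trans[OF _ abs_ge_self] mult_right_mono
        simp: power2_eq_square\<close>)
qed

lemma bounded_continuous_integrable_mult_poisson_multiplier:
  assumes F: "bounded_continuous_integrable F" and y: "y \<ge> 0"
  shows "bounded_continuous_integrable (\<lambda>\<xi>. F \<xi> * complex_of_real (poisson_multiplier y \<xi>))"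
proof -
  note F' = bounded_continuous_integrableD[OF F]
  obtain M where M: "\<And>x. norm (F x) \<le> M" using F'(3) by blast
  have le: "norm (F \<xi> * complex_of_real (poisson_multiplier y \<xi>)) \<le> norm (F \<xi>)" for \<xi>
    using poisson_multiplier_nonneg[of y \<xi>] poisson_multiplier_le_1[OF y, of \<xi>]
    by (simp add: norm_mult mult_left_le)
  show ?thesis
  proof (rule bounded_continuous_integrableI)
    show "integrable lborel (\<lambda>\<xi>. F \<xi> * complex_of_real (poisson_multiplier y \<xi>))"
      by (rule Bochner_Integration.integrable_bound[OF F'(1)]) (use F'(4) le in auto)
    show "isCont (\<lambda>\<xi>. F \<xi> * complex_of_real (poisson_multiplier y \<xi>)) x" for x
      by (intro continuous_intros F'(2) isCont_o2[OF isCont_poisson_multiplier])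
    show "norm (F x * complex_of_real (poisson_multiplier y x)) \<le> M" for x
      using le M order_trans by blast
  qed
qed

lemma poisson_slice_inner:
  assumes F: "bounded_continuous_integrable F" and G: "bounded_continuous_integrable G" and y: "y > 0"
  shows "integrable lborel
           (\<lambda>x. poisson_ext (inv_fourier F) (Complex x y) * cnj (poisson_ext (inv_fourier G) (Complex x y)))"
    and "(LINT x|lborel. poisson_ext (inv_fourier F) (Complex x y) * cnj (poisson_ext (inv_fourier G) (Complex x y)))
       = (LINT \<xi>|lborel. F \<xi> * cnj (G \<xi>) * complex_of_real (exp (-((4*pi*\<bar>\<xi>\<bar>)*y))))"
proof -
  note FE = bounded_continuous_integrable_mult_poisson_multiplier[OF F less_imp_le[OF y]]
  note GE = bounded_continuous_integrable_mult_poisson_multiplier[OF G less_imp_le[OF y]]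
  note ext = poisson_ext_inv_fourier[OF bounded_continuous_integrableD(1) y]
  show "integrable lborel
      (\<lambda>x. poisson_ext (inv_fourier F) (Complex x y) * cnj (poisson_ext (inv_fourier G) (Complex x y)))"
    unfolding ext[OF F] ext[OF G] by (rule parseval_inv_fourier(1)[OF FE GE])
  have "complex_of_real (poisson_multiplier y \<xi>) * complex_of_real (poisson_multiplier y \<xi>)
      = complex_of_real (exp (-((4*pi*\<bar>\<xi>\<bar>)*y)))" for \<xi>
    by (simp only: of_real_mult[symmetric] poisson_multiplier_sq[symmetric] power2_eq_square)
  then have "F \<xi> * complex_of_real (poisson_multiplier y \<xi>) * cnj (G \<xi> * complex_of_real (poisson_multiplier y \<xi>))
      = F \<xi> * cnj (G \<xi>) * complex_of_real (exp (-((4*pi*\<bar>\<xi>\<bar>)*y)))" for \<xi>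
    by (metis (no_types, lifting) complex_cnj_complex_of_real complex_cnj_mult mult.assoc mult.left_commute)
  then show "(LINT x|lborel. poisson_ext (inv_fourier F) (Complex x y) * cnj (poisson_ext (inv_fourier G) (Complex x y)))
      = (LINT \<xi>|lborel. F \<xi> * cnj (G \<xi>) * complex_of_real (exp (-((4*pi*\<bar>\<xi>\<bar>)*y))))"
    unfolding ext[OF F] ext[OF G] parseval_inv_fourier(2)[OF FE GE] by (simp only:)
qed

lemma poisson_slice_energy:
  assumes F: "bounded_continuous_integrable F" and y: "y > 0"
  shows "integrable lborel (\<lambda>x. (norm (poisson_ext (inv_fourier F) (Complex x y)))^2)"
    and "(LINT x|lborel. (norm (poisson_ext (inv_fourier F) (Complex x y)))^2)
       = (LINT \<xi>|lborel. (norm (F \<xi>))^2 * exp (-((4*pi*\<bar>\<xi>\<bar>)*y)))"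
proof -
  note FE = bounded_continuous_integrable_mult_poisson_multiplier[OF F less_imp_le[OF y]]
  note ext = poisson_ext_inv_fourier[OF bounded_continuous_integrableD(1)[OF F] y]
  show "integrable lborel (\<lambda>x. (norm (poisson_ext (inv_fourier F) (Complex x y)))^2)"
    unfolding ext by (rule plancherel_inv_fourier(1)[OF FE])
  have "(norm (F \<xi> * complex_of_real (poisson_multiplier y \<xi>)))^2
      = (norm (F \<xi>))^2 * exp (-((4*pi*\<bar>\<xi>\<bar>)*y))" for \<xi>
    by (simp add: norm_mult power_mult_distrib poisson_multiplier_sq[symmetric] poisson_multiplier_nonneg)
  then show "(LINT x|lborel. (norm (poisson_ext (inv_fourier F) (Complex x y)))^2)
      = (LINT \<xi>|lborel. (norm (F \<xi>))^2 * exp (-((4*pi*\<bar>\<xi>\<bar>)*y)))"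
    unfolding ext plancherel_inv_fourier(2)[OF FE] by (simp only:)
qed

lemma integrable_norm_sq_mult_exp:
  assumes F: "bounded_continuous_integrable F" and y: "y \<ge> 0"
  shows "integrable lborel (\<lambda>\<xi>. (norm (F \<xi>))^2 * exp (-((4*pi*\<bar>\<xi>\<bar>)*y)))"
  using integrable_norm_sq[OF bounded_continuous_integrable_mult_poisson_multiplier[OF F y]]
  by (simp add: norm_mult power_mult_distrib poisson_multiplier_sq poisson_multiplier_nonneg)

lemma poisson_ext_measurable [measurable]:
  assumes [measurable]: "f \<in> borel_measurable borel"
  shows "poisson_ext f \<in> borel_measurable borel"
  unfolding poisson_ext_def[abs_def] by measurable

lemma has_bochner_integral_Ioi_mult_exp:
  fixes b :: real
  assumes b: "b > 0"
  shows "has_bochner_integral lborel (\<lambda>y. indicator {0<..} y * y * exp (-(b*y))) (1 / b^2)"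
proof -
  have "has_bochner_integral lborel (\<lambda>x. x^1 * exp (-x) * indicator {0 <..} x::real) (fact 1)"
    by (rule has_bochner_integral_I0i_power_exp_m)
  then have "has_bochner_integral lborel
      (\<lambda>y. (0 + b * y)^1 * exp (-(0 + b * y)) * indicator {0 <..} (0 + b * y)::real) (1 /\<^sub>R \<bar>b\<bar>)"
    using lborel_has_bochner_integral_real_affine_iff[of b "\<lambda>x. x^1 * exp (-x) * indicator {0 <..} x::real" 1 0] b
    by simp
  then have "has_bochner_integral lborel
      (\<lambda>y. (1/b) * ((0 + b * y)^1 * exp (-(0 + b * y)) * indicator {0 <..} (0 + b * y)::real)) ((1/b) * (1 /\<^sub>R \<bar>b\<bar>))"
    by (rule has_bochner_integral_mult_right)
  moreover have "(\<lambda>y. (1/b) * ((0 + b * y)^1 * exp (-(0 + b * y)) * indicator {0 <..} (0 + b * y)::real))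
      = (\<lambda>y. indicator {0<..} y * y * exp (-(b*y)))"
    using b by (auto simp: indicator_def zero_less_mult_iff)
  moreover have "(1/b) * (1 /\<^sub>R \<bar>b\<bar>) = 1 / b^2"
    using b by (simp add: power2_eq_square field_simps)
  ultimately show ?thesis by simp
qed

text \<open>The weight \<open>y e^{-4\<pi>|\<xi>|y}\<close> integrates over \<open>y > 0\<close> to \<open>(4\<pi>|\<xi>|)\<^sup>-\<^sup>2\<close>,
  which exactly undoes the symbol \<open>4\<pi>|\<xi>|\<close> of \<open>D\<close> applied twice.\<close>

lemma nn_integral_poisson_weight:
  fixes w :: "real \<Rightarrow> real"
  assumes [measurable]: "w \<in> borel_measurable borel" and w: "\<And>\<xi>. w \<xi> \<ge> 0"
  shows "(\<integral>\<^sup>+ y. (\<integral>\<^sup>+ \<xi>. ennreal (indicator {0<..} y * y * w \<xi> * exp (-((4*pi*\<bar>\<xi>\<bar>)*y))) \<partial>lborel) \<partial>lborel)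
       = (\<integral>\<^sup>+ \<xi>. ennreal (w \<xi> / (4*pi*\<bar>\<xi>\<bar>)^2) \<partial>lborel)"
proof -
  have "(\<integral>\<^sup>+ y. (\<integral>\<^sup>+ \<xi>. ennreal (indicator {0<..} y * y * w \<xi> * exp (-((4*pi*\<bar>\<xi>\<bar>)*y))) \<partial>lborel) \<partial>lborel)
      = (\<integral>\<^sup>+ \<xi>. (\<integral>\<^sup>+ y. ennreal (indicator {0<..} y * y * w \<xi> * exp (-((4*pi*\<bar>\<xi>\<bar>)*y))) \<partial>lborel) \<partial>lborel)"
    by (rule lborel_pair.Fubini') measurable
  also have "\<dots> = (\<integral>\<^sup>+ \<xi>. ennreal (w \<xi> / (4*pi*\<bar>\<xi>\<bar>)^2) \<partial>lborel)"
  proof (rule nn_integral_cong_AE)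
    show "AE \<xi> in lborel. (\<integral>\<^sup>+ y. ennreal (indicator {0<..} y * y * w \<xi> * exp (-((4*pi*\<bar>\<xi>\<bar>)*y))) \<partial>lborel)
        = ennreal (w \<xi> / (4*pi*\<bar>\<xi>\<bar>)^2)"
      using AE_lborel_singleton[of 0]
    proof eventually_elim
      case (elim \<xi>)
      let ?e = "\<lambda>y. indicator {0<..} y * y * exp (-((4*pi*\<bar>\<xi>\<bar>)*y))"
      have e: "has_bochner_integral lborel ?e (1 / (4*pi*\<bar>\<xi>\<bar>)^2)"
        using elim by (intro has_bochner_integral_Ioi_mult_exp) simp
      have "(\<integral>\<^sup>+ y. ennreal (?e y) \<partial>lborel) = ennreal (1 / (4*pi*\<bar>\<xi>\<bar>)^2)"
        using nn_integral_eq_integral[OF integrable.intros[OF e]]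
          has_bochner_integral_integral_eq[OF e]
        by (simp add: indicator_def)
      moreover have "(\<integral>\<^sup>+ y. ennreal (indicator {0<..} y * y * w \<xi> * exp (-((4*pi*\<bar>\<xi>\<bar>)*y))) \<partial>lborel)
          = ennreal (w \<xi>) * (\<integral>\<^sup>+ y. ennreal (?e y) \<partial>lborel)"
        by (subst nn_integral_cmult[symmetric])
          (auto intro!: nn_integral_cong simp: ennreal_mult'[symmetric] w mult_ac indicator_def)
      ultimately show ?case
        using w by (simp add: ennreal_mult'[symmetric] divide_inverse)
    qed
  qed
  finally show ?thesis .
qed

lemma integral_Ioi_poisson_weight:
  fixes c :: complex
  assumes "\<xi> \<noteq> 0"
  shows "(LINT y|lborel. indicator {0<..} y *\<^sub>R (complex_of_real y * (c * complex_of_real (exp (-((4*pi*\<bar>\<xi>\<bar>)*y))))))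
       = c / complex_of_real ((4*pi*\<bar>\<xi>\<bar>)^2)"
proof -
  have "(LINT y|lborel. indicator {0<..} y *\<^sub>R (complex_of_real y * (c * complex_of_real (exp (-((4*pi*\<bar>\<xi>\<bar>)*y))))))
      = (LINT y|lborel. c * complex_of_real (indicator {0<..} y * y * exp (-((4*pi*\<bar>\<xi>\<bar>)*y))))"
    by (intro Bochner_Integration.integral_cong) (simp_all add: indicator_def mult_ac)
  also have "\<dots> = c * complex_of_real (LINT y|lborel. indicator {0<..} y * y * exp (-((4*pi*\<bar>\<xi>\<bar>)*y)))"
    by (simp only: integral_mult_right_zero integral_complex_of_real)
  also have "(LINT y|lborel. indicator {0<..} y * y * exp (-((4*pi*\<bar>\<xi>\<bar>)*y))) = 1 / (4*pi*\<bar>\<xi>\<bar>)^2"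
    using assms by (intro has_bochner_integral_integral_eq has_bochner_integral_Ioi_mult_exp) simp
  finally show ?thesis by (simp add: divide_inverse)
qed

lemma nn_integral_poisson_energy:
  assumes F: "bounded_continuous_integrable F"
  shows "(\<integral>\<^sup>+ y. (\<integral>\<^sup>+ x. ennreal (indicator {0<..} y * y * (norm (poisson_ext (inv_fourier F) (Complex x y)))^2)
            \<partial>lborel) \<partial>lborel)
       = (\<integral>\<^sup>+ \<xi>. ennreal ((norm (F \<xi>))^2 / (4*pi*\<bar>\<xi>\<bar>)^2) \<partial>lborel)"
proof -
  have [measurable]: "F \<in> borel_measurable borel" by (rule bounded_continuous_integrableD(4)[OF F])
  have slice: "(\<integral>\<^sup>+ x. ennreal (indicator {0<..} y * y * (norm (poisson_ext (inv_fourier F) (Complex x y)))^2) \<partial>lborel)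
      = (\<integral>\<^sup>+ \<xi>. ennreal (indicator {0<..} y * y * (norm (F \<xi>))^2 * exp (-((4*pi*\<bar>\<xi>\<bar>)*y))) \<partial>lborel)" for y
  proof (cases "y > 0")
    case True
    note energy = poisson_slice_energy[OF F True]
    have "(\<integral>\<^sup>+ x. ennreal (indicator {0<..} y * y * (norm (poisson_ext (inv_fourier F) (Complex x y)))^2) \<partial>lborel)
        = ennreal (y * (LINT x|lborel. (norm (poisson_ext (inv_fourier F) (Complex x y)))^2))"
      using True nn_integral_eq_integral[OF integrable_mult_right[OF energy(1), of y]] by simp
    also have "\<dots> = ennreal (LINT \<xi>|lborel. y * ((norm (F \<xi>))^2 * exp (-((4*pi*\<bar>\<xi>\<bar>)*y))))"
      by (simp add: energy(2))
    also have "\<dots> = (\<integral>\<^sup>+ \<xi>. ennreal (indicator {0<..} y * y * (norm (F \<xi>))^2 * exp (-((4*pi*\<bar>\<xi>\<bar>)*y))) \<partial>lborel)"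
      using True nn_integral_eq_integral[OF integrable_mult_right[OF
          integrable_norm_sq_mult_exp[OF F less_imp_le[OF True]], of y]]
      by (simp add: mult_ac)
    finally show ?thesis .
  qed (simp add: indicator_def)
  show ?thesis
    unfolding slice by (rule nn_integral_poisson_weight) simp_all
qed

lemma norm_mult_le_sum_sq: "norm (a * b) \<le> (norm a)^2 + (norm b)^2" for a b :: "'a::real_normed_div_algebra"
proof -
  have "0 \<le> norm a * norm b" by simp
  moreover have "2 * (norm a * norm b) \<le> (norm a)^2 + (norm b)^2"
    using sum_squares_bound[of "norm a" "norm b"] by (simp add: mult.assoc)
  ultimately show ?thesis unfolding norm_mult by linarith
qed

lemma nn_integral_poisson_energy_finite:
  assumes F: "bounded_continuous_integrable F"
    and wF: "integrable lborel (\<lambda>\<xi>. (norm (F \<xi>))^2 / (4*pi*\<bar>\<xi>\<bar>)^2)"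
  shows "(\<integral>\<^sup>+ y. (\<integral>\<^sup>+ x. ennreal (indicator {0<..} y * y * (norm (poisson_ext (inv_fourier F) (Complex x y)))^2)
            \<partial>lborel) \<partial>lborel) < \<infinity>"
proof -
  have "(\<integral>\<^sup>+ \<xi>. ennreal ((norm (F \<xi>))^2 / (4*pi*\<bar>\<xi>\<bar>)^2) \<partial>lborel)
      = ennreal (LINT \<xi>|lborel. (norm (F \<xi>))^2 / (4*pi*\<bar>\<xi>\<bar>)^2)"
    by (rule nn_integral_eq_integral[OF wF]) simp
  then show ?thesis
    by (simp add: nn_integral_poisson_energy[OF F])
qed

lemma integrable_poisson_area_pair:
  assumes F: "bounded_continuous_integrable F" and G: "bounded_continuous_integrable G"
    and wF: "integrable lborel (\<lambda>\<xi>. (norm (F \<xi>))^2 / (4*pi*\<bar>\<xi>\<bar>)^2)"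
    and wG: "integrable lborel (\<lambda>\<xi>. (norm (G \<xi>))^2 / (4*pi*\<bar>\<xi>\<bar>)^2)"
  shows "integrable (lborel \<Otimes>\<^sub>M lborel) (\<lambda>(x,y). indicator {0<..} y *\<^sub>R
           (poisson_ext (inv_fourier F) (Complex x y) * cnj (poisson_ext (inv_fourier G) (Complex x y))
            * complex_of_real y))"
proof (rule lborel_pair_integrableI)
  have [measurable]: "F \<in> borel_measurable borel" "G \<in> borel_measurable borel"
    using F G by (auto dest: bounded_continuous_integrableD(4))
  let ?P = "\<lambda>H x y. poisson_ext (inv_fourier H) (Complex x y)"
  let ?e = "\<lambda>H x y. ennreal (indicator {0<..} y * y * (norm (?P H x y))^2)"
  show "(\<lambda>(x,y). indicator {0<..} y *\<^sub>R (?P F x y * cnj (?P G x y) * complex_of_real y))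
      \<in> borel_measurable (lborel \<Otimes>\<^sub>M lborel)"
    by measurable
  have "ennreal (norm (indicator {0<..} y *\<^sub>R (?P F x y * cnj (?P G x y) * complex_of_real y)))
      \<le> ?e F x y + ?e G x y" for x y
  proof (cases "y > 0")
    case True
    have "norm (indicator {0<..} y *\<^sub>R (?P F x y * cnj (?P G x y) * complex_of_real y))
        = y * norm (?P F x y * cnj (?P G x y))"
      using True by (simp add: norm_mult)
    also have "\<dots> \<le> y * ((norm (?P F x y))^2 + (norm (?P G x y))^2)"
      using True norm_mult_le_sum_sq[of "?P F x y" "cnj (?P G x y)"] by (intro mult_left_mono) simp_all
    finally show ?thesis
      using True by (simp add: ennreal_plus[symmetric] algebra_simps del: ennreal_plus)
  qed simp
  then have "(\<integral>\<^sup>+ y. (\<integral>\<^sup>+ x. ennreal (norm (indicator {0<..} y *\<^sub>R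
        (?P F x y * cnj (?P G x y) * complex_of_real y))) \<partial>lborel) \<partial>lborel)
      \<le> (\<integral>\<^sup>+ y. (\<integral>\<^sup>+ x. ?e F x y + ?e G x y \<partial>lborel) \<partial>lborel)"
    by (intro nn_integral_mono)
  also have "\<dots> = (\<integral>\<^sup>+ y. (\<integral>\<^sup>+ x. ?e F x y \<partial>lborel) \<partial>lborel) + (\<integral>\<^sup>+ y. (\<integral>\<^sup>+ x. ?e G x y \<partial>lborel) \<partial>lborel)"
    by (simp add: nn_integral_add)
  also have "\<dots> < \<infinity>"
    using nn_integral_poisson_energy_finite[OF F wF] nn_integral_poisson_energy_finite[OF G wG]
    by (simp add: ennreal_add_less_top)
  finally show "(\<integral>\<^sup>+ y. (\<integral>\<^sup>+ x. ennreal (norm (case (x, y) of (x, y) \<Rightarrow> indicator {0<..} y *\<^sub>R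
        (?P F x y * cnj (?P G x y) * complex_of_real y))) \<partial>lborel) \<partial>lborel) < \<infinity>"
    by simp
qed

lemma integrable_spectral_area_pair:
  fixes F G :: "real \<Rightarrow> complex"
  assumes [measurable]: "F \<in> borel_measurable borel" "G \<in> borel_measurable borel"
    and wF: "integrable lborel (\<lambda>\<xi>. (norm (F \<xi>))^2 / (4*pi*\<bar>\<xi>\<bar>)^2)"
    and wG: "integrable lborel (\<lambda>\<xi>. (norm (G \<xi>))^2 / (4*pi*\<bar>\<xi>\<bar>)^2)"
  shows "integrable (lborel \<Otimes>\<^sub>M lborel) (\<lambda>(\<xi>,y). indicator {0<..} y *\<^sub>R
           (complex_of_real y * (F \<xi> * cnj (G \<xi>) * complex_of_real (exp (-((4*pi*\<bar>\<xi>\<bar>)*y))))))"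
proof (rule lborel_pair_integrableI)
  let ?w = "\<lambda>\<xi>. (norm (F \<xi>))^2 + (norm (G \<xi>))^2"
  show "(\<lambda>(\<xi>,y). indicator {0<..} y *\<^sub>R
      (complex_of_real y * (F \<xi> * cnj (G \<xi>) * complex_of_real (exp (-((4*pi*\<bar>\<xi>\<bar>)*y))))))
      \<in> borel_measurable (lborel \<Otimes>\<^sub>M lborel)"
    by measurable
  have "norm (indicator {0<..} y *\<^sub>R
      (complex_of_real y * (F \<xi> * cnj (G \<xi>) * complex_of_real (exp (-((4*pi*\<bar>\<xi>\<bar>)*y))))))
      \<le> indicator {0<..} y * y * ?w \<xi> * exp (-((4*pi*\<bar>\<xi>\<bar>)*y))" for \<xi> y
    using norm_mult_le_sum_sq[of "F \<xi>" "cnj (G \<xi>)"]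
    by (cases "y > 0") (auto simp: norm_mult intro!: mult_right_mono mult_left_mono)
  then have "(\<integral>\<^sup>+ y. (\<integral>\<^sup>+ \<xi>. ennreal (norm (indicator {0<..} y *\<^sub>R
      (complex_of_real y * (F \<xi> * cnj (G \<xi>) * complex_of_real (exp (-((4*pi*\<bar>\<xi>\<bar>)*y))))))) \<partial>lborel) \<partial>lborel)
      \<le> (\<integral>\<^sup>+ y. (\<integral>\<^sup>+ \<xi>. ennreal (indicator {0<..} y * y * ?w \<xi> * exp (-((4*pi*\<bar>\<xi>\<bar>)*y))) \<partial>lborel) \<partial>lborel)"
    by (intro nn_integral_mono ennreal_leI)
  also have "\<dots> = (\<integral>\<^sup>+ \<xi>. ennreal (?w \<xi> / (4*pi*\<bar>\<xi>\<bar>)^2) \<partial>lborel)"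
    by (rule nn_integral_poisson_weight) simp_all
  also have "\<dots> = ennreal (LINT \<xi>|lborel. ?w \<xi> / (4*pi*\<bar>\<xi>\<bar>)^2)"
    using wF wG by (intro nn_integral_eq_integral) (simp_all add: add_divide_distrib)
  finally show "(\<integral>\<^sup>+ y. (\<integral>\<^sup>+ \<xi>. ennreal (norm (case (\<xi>, y) of (\<xi>, y) \<Rightarrow> indicator {0<..} y *\<^sub>R
      (complex_of_real y * (F \<xi> * cnj (G \<xi>) * complex_of_real (exp (-((4*pi*\<bar>\<xi>\<bar>)*y))))))) \<partial>lborel) \<partial>lborel)
      < \<infinity>"
    by (simp add: le_less_trans)
qed

lemma integral_poisson_area_pair:
  assumes F: "bounded_continuous_integrable F" and G: "bounded_continuous_integrable G"
    and wF: "integrable lborel (\<lambda>\<xi>. (norm (F \<xi>))^2 / (4*pi*\<bar>\<xi>\<bar>)^2)"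
    and wG: "integrable lborel (\<lambda>\<xi>. (norm (G \<xi>))^2 / (4*pi*\<bar>\<xi>\<bar>)^2)"
  shows "integral\<^sup>L (lborel \<Otimes>\<^sub>M lborel) (\<lambda>(x,y). indicator {0<..} y *\<^sub>R
           (poisson_ext (inv_fourier F) (Complex x y) * cnj (poisson_ext (inv_fourier G) (Complex x y))
            * complex_of_real y))
       = (LINT \<xi>|lborel. F \<xi> * cnj (G \<xi>) / complex_of_real ((4*pi*\<bar>\<xi>\<bar>)^2))"
proof -
  have [measurable]: "F \<in> borel_measurable borel" "G \<in> borel_measurable borel"
    using F G by (auto dest: bounded_continuous_integrableD(4))
  define h where "h x y = indicator {0<..} y *\<^sub>R
    (poisson_ext (inv_fourier F) (Complex x y) * cnj (poisson_ext (inv_fourier G) (Complex x y))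
     * complex_of_real y)" for x y
  define g where "g \<xi> y = indicator {0<..} y *\<^sub>R
    (complex_of_real y * (F \<xi> * cnj (G \<xi>) * complex_of_real (exp (-((4*pi*\<bar>\<xi>\<bar>)*y)))))" for \<xi> y
  have h: "integrable (lborel \<Otimes>\<^sub>M lborel) (\<lambda>(x,y). h x y)"
    unfolding h_def by (rule integrable_poisson_area_pair[OF F G wF wG])
  have g: "integrable (lborel \<Otimes>\<^sub>M lborel) (\<lambda>(\<xi>,y). g \<xi> y)"
    unfolding g_def by (rule integrable_spectral_area_pair[OF _ _ wF wG]) simp_all
  have slice: "(LINT x|lborel. h x y) = (LINT \<xi>|lborel. g \<xi> y)" for y
  proof (cases "y > 0")
    case True
    have "(LINT x|lborel. h x y) = (LINT x|lborel. complex_of_real y *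
        (poisson_ext (inv_fourier F) (Complex x y) * cnj (poisson_ext (inv_fourier G) (Complex x y))))"
      using True by (intro Bochner_Integration.integral_cong) (simp_all add: h_def mult_ac)
    also have "\<dots> = complex_of_real y *
        (LINT \<xi>|lborel. F \<xi> * cnj (G \<xi>) * complex_of_real (exp (-((4*pi*\<bar>\<xi>\<bar>)*y))))"
      by (simp only: integral_mult_right_zero poisson_slice_inner(2)[OF F G True])
    also have "\<dots> = (LINT \<xi>|lborel. g \<xi> y)"
      using True by (simp add: g_def)
    finally show ?thesis .
  qed (simp add: h_def g_def)
  have "integral\<^sup>L (lborel \<Otimes>\<^sub>M lborel) (\<lambda>(x,y). h x y) = (LINT y|lborel. LINT x|lborel. h x y)"
    using lborel_pair.integral_fst'[OF h] lborel_pair.Fubini_integral[OF h] by simp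
  also have "\<dots> = (LINT y|lborel. LINT \<xi>|lborel. g \<xi> y)"
    by (simp only: slice)
  also have "\<dots> = (LINT \<xi>|lborel. LINT y|lborel. g \<xi> y)"
    by (rule lborel_pair.Fubini_integral[OF g])
  also have "\<dots> = (LINT \<xi>|lborel. F \<xi> * cnj (G \<xi>) / complex_of_real ((4*pi*\<bar>\<xi>\<bar>)^2))"
  proof (rule integral_cong_AE)
    show "AE \<xi> in lborel. (LINT y|lborel. g \<xi> y) = F \<xi> * cnj (G \<xi>) / complex_of_real ((4*pi*\<bar>\<xi>\<bar>)^2)"
      using AE_lborel_singleton[of 0] unfolding g_def by eventually_elim (rule integral_Ioi_poisson_weight)
  qed (simp_all add: g_def)
  finally show ?thesis
    by (simp add: h_def)
qed

theorem poisson_area_identity: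
  assumes F: "bounded_continuous_integrable F" and G: "bounded_continuous_integrable G"
    and wF: "integrable lborel (\<lambda>\<xi>. (norm (F \<xi>))^2 / (4*pi*\<bar>\<xi>\<bar>)^2)"
    and wG: "integrable lborel (\<lambda>\<xi>. (norm (G \<xi>))^2 / (4*pi*\<bar>\<xi>\<bar>)^2)"
  shows "set_integrable lborel upper_half_plane
           (\<lambda>z. poisson_ext (inv_fourier F) z * cnj (poisson_ext (inv_fourier G) z) * complex_of_real (Im z))"
    and "(LINT z:upper_half_plane|lborel.
            poisson_ext (inv_fourier F) z * cnj (poisson_ext (inv_fourier G) z) * complex_of_real (Im z))
         = (LINT \<xi>|lborel. F \<xi> * cnj (G \<xi>) / complex_of_real ((4*pi*\<bar>\<xi>\<bar>)^2))"
proof -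
  have [measurable]: "F \<in> borel_measurable borel" "G \<in> borel_measurable borel"
    using F G by (auto dest: bounded_continuous_integrableD(4))
  note area = set_integral_upper_half_plane[where
      H="\<lambda>z. poisson_ext (inv_fourier F) z * cnj (poisson_ext (inv_fourier G) z) * complex_of_real (Im z)"]
  show "set_integrable lborel upper_half_plane
      (\<lambda>z. poisson_ext (inv_fourier F) z * cnj (poisson_ext (inv_fourier G) z) * complex_of_real (Im z))"
    using area(1) integrable_poisson_area_pair[OF F G wF wG] by simp
  show "(LINT z:upper_half_plane|lborel.
      poisson_ext (inv_fourier F) z * cnj (poisson_ext (inv_fourier G) z) * complex_of_real (Im z))
      = (LINT \<xi>|lborel. F \<xi> * cnj (G \<xi>) / complex_of_real ((4*pi*\<bar>\<xi>\<bar>)^2))"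
    using area(2) integral_poisson_area_pair[OF F G wF wG] by simp
qed

section \<open>The wavelets \<open>f\<^sub>I\<close>\<close>

lemma bounded_continuous_integrable_schwartz:
  assumes "schwartz \<psi>"
  shows "bounded_continuous_integrable \<psi>"
proof -
  obtain F :: "nat \<Rightarrow> real \<Rightarrow> complex" where F0: "F 0 = \<psi>"
    and F': "\<And>n x. (F n has_vector_derivative F (Suc n) x) (at x)"
    and decay: "\<And>k n. \<exists>C. \<forall>x. \<bar>x\<bar> ^ k * norm (F n x) \<le> C"
    using assms unfolding schwartz_def by blast
  have cont: "isCont \<psi> x" for x
    using has_vector_derivative_continuous[OF F'[of 0 x]] F0 by simp
  obtain C0 where C0: "\<And>x. norm (\<psi> x) \<le> C0" using decay[of 0 0] F0 by auto
  obtain C2 where C2: "\<And>x. \<bar>x\<bar>^2 * norm (\<psi> x) \<le> C2" using decay[of 2 0] F0 by auto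
  have "integrable lborel (\<lambda>x::real. (C0 + C2) * inverse (1 + x^2))"
    using integrable_inverse_1_plus_square by (simp add: set_integrable_def)
  then have "integrable lborel \<psi>"
  proof (rule Bochner_Integration.integrable_bound)
    have "\<psi> \<in> borel_measurable borel"
      by (intro borel_measurable_continuous_onI continuous_at_imp_continuous_on ballI cont)
    then show "\<psi> \<in> borel_measurable lborel" by simp
    have "norm (\<psi> x) \<le> (C0 + C2) * inverse (1 + x^2)" for x
    proof -
      have "norm (\<psi> x) * (1 + x^2) \<le> C0 + C2" using C0[of x] C2[of x] by (simp add: algebra_simps)
      then show ?thesis by (simp add: field_simps add_pos_nonneg)
    qed
    then show "AE x in lborel. norm (\<psi> x) \<le> norm ((C0 + C2) * inverse (1 + x^2))"
      by (intro AE_I2) (simp add: order_trans[OF _ abs_ge_self])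
  qed
  then show ?thesis using cont C0 by (rule bounded_continuous_integrableI)
qed

lemma bounded_continuous_integrable_vanishing:
  fixes h :: "real \<Rightarrow> complex"
  assumes cont: "\<And>x. isCont h x" and vanish: "\<And>x. \<bar>x\<bar> > R \<Longrightarrow> h x = 0"
  shows "bounded_continuous_integrable h"
proof -
  have "compact (h ` {-R..R})"
    by (intro compact_continuous_image continuous_at_imp_continuous_on ballI cont compact_Icc)
  then obtain M where M: "\<And>x. x \<in> {-R..R} \<Longrightarrow> norm (h x) \<le> M"
    using compact_imp_bounded bounded_iff by (metis image_eqI)
  have le: "norm (h x) \<le> max M 0 * indicator {-R..R} x" for x
    using M[of x] vanish[of x] by (cases "\<bar>x\<bar> > R") (auto simp: indicator_def)
  have "integrable lborel h"
  proof (rule Bochner_Integration.integrable_bound)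
    show "integrable lborel (\<lambda>x. max M 0 * indicator {-R..R} x)"
      by (intro integrable_mult_right integrable_real_indicator) (auto simp: emeasure_lborel_Icc_eq)
    have "h \<in> borel_measurable borel"
      by (intro borel_measurable_continuous_onI continuous_at_imp_continuous_on ballI cont)
    then show "h \<in> borel_measurable lborel" by simp
  qed (use le in \<open>auto intro!: AE_I2 order_trans[OF _ abs_ge_self]\<close>)
  moreover have "norm (h x) \<le> max M 0" for x
    using le[of x] by (cases "x \<in> {-R..R}") auto
  ultimately show ?thesis by (rule bounded_continuous_integrableI[OF _ cont])
qed

lemma dlen_pos: "dlen I > 0"
  by (simp add: dlen_def split: prod.splits)

lemma bounded_continuous_integrable_psi_I:
  assumes "bounded_continuous_integrable \<psi>"
  shows "bounded_continuous_integrable (psi_I \<psi> I)"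
proof -
  let ?L = "dlen I" and ?c = "dcenter I"
  have L: "?L > 0" by (rule dlen_pos)
  note \<psi> = bounded_continuous_integrableD[OF assms]
  obtain M where M: "\<And>x. norm (\<psi> x) \<le> M" using \<psi>(3) by blast
  have "integrable lborel (\<lambda>x. complex_of_real (?L powr (-1/2)) * \<psi> (-?c/?L + (1/?L) * x))"
    using L by (intro integrable_mult_right lborel_integrable_real_affine[OF \<psi>(1)]) simp
  also have "(\<lambda>x. complex_of_real (?L powr (-1/2)) * \<psi> (-?c/?L + (1/?L) * x)) = psi_I \<psi> I"
    using L by (auto simp: psi_I_def diff_divide_distrib)
  finally show ?thesis
  proof (rule bounded_continuous_integrableI)
    show "isCont (psi_I \<psi> I) x" for x
      unfolding psi_I_def[abs_def] by (intro continuous_intros isCont_o2[OF _ \<psi>(2)]) (use L in auto)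
    show "norm (psi_I \<psi> I x) \<le> \<bar>?L powr (-1/2)\<bar> * M" for x
      by (auto simp: psi_I_def norm_mult intro!: mult_left_mono M)
  qed
qed

lemma fourier_psi_I:
  fixes \<psi> :: "real \<Rightarrow> complex"
  assumes "integrable lborel \<psi>"
  shows "fourier (psi_I \<psi> I) \<xi>
       = complex_of_real (sqrt (dlen I)) * cis (-2*pi*dcenter I*\<xi>) * fourier \<psi> (dlen I * \<xi>)"
proof -
  let ?L = "dlen I" and ?c = "dcenter I"
  have L: "?L > 0" by (rule dlen_pos)
  have "fourier (psi_I \<psi> I) \<xi> = \<bar>?L\<bar> *\<^sub>R (LINT u|lborel. psi_I \<psi> I (?c + ?L * u) * cis (-2*pi*(?c + ?L * u)*\<xi>))"
    unfolding fourier_def using L by (intro lborel_integral_real_affine) simp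
  also have "\<dots> = complex_of_real (?L * ?L powr (-1/2)) * cis (-2*pi*?c*\<xi>)
      * (LINT u|lborel. \<psi> u * cis (-2*pi*u*(?L*\<xi>)))"
  proof -
    have "psi_I \<psi> I (?c + ?L * u) * cis (-2*pi*(?c + ?L * u)*\<xi>)
        = (complex_of_real (?L powr (-1/2)) * cis (-2*pi*?c*\<xi>)) * (\<psi> u * cis (-2*pi*u*(?L*\<xi>)))" for u
      using L by (simp add: psi_I_def cis_mult algebra_simps)
    then show ?thesis
      using L by (simp only: integral_mult_right_zero) (simp add: scaleR_conv_of_real mult_ac)
  qed
  also have "?L * ?L powr (-1/2) = sqrt ?L"
    using L powr_add[of ?L 1 "-1/2"] by (simp add: powr_half_sqrt)
  finally show ?thesis by (simp add: fourier_def)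
qed

definition f_I_symbol :: "(real \<Rightarrow> complex) \<Rightarrow> int \<times> int \<Rightarrow> real \<Rightarrow> complex" where
  "f_I_symbol \<psi> I \<xi> = complex_of_real (sqrt (dlen I) * (4*pi*\<bar>\<xi>\<bar>)) * fourier (psi_I \<psi> I) \<xi>"

lemma f_I_eq_inv_fourier: "f_I \<psi> I = inv_fourier (f_I_symbol \<psi> I)"
  unfolding f_I_def Dop_def inv_fourier_def f_I_symbol_def
  by (auto simp flip: integral_mult_right_zero simp: mult_ac)

lemma fourier_psi_I_vanishing:
  assumes "integrable lborel \<psi>" and vanish: "\<And>\<eta>. \<bar>\<eta>\<bar> > R \<Longrightarrow> fourier \<psi> \<eta> = 0"
    and "\<bar>\<xi>\<bar> > R / dlen I"
  shows "fourier (psi_I \<psi> I) \<xi> = 0"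
proof -
  have "\<bar>dlen I * \<xi>\<bar> > R"
    using assms(3) dlen_pos[of I] by (simp add: abs_mult field_simps)
  then show ?thesis
    using fourier_psi_I[OF assms(1)] vanish by simp
qed

lemma bounded_continuous_integrable_f_I_symbol:
  assumes \<psi>: "bounded_continuous_integrable \<psi>" and vanish: "\<And>\<eta>. \<bar>\<eta>\<bar> > R \<Longrightarrow> fourier \<psi> \<eta> = 0"
  shows "bounded_continuous_integrable (f_I_symbol \<psi> I)"
proof (rule bounded_continuous_integrable_vanishing)
  have "integrable lborel (psi_I \<psi> I)"
    by (rule bounded_continuous_integrableD(1)[OF bounded_continuous_integrable_psi_I[OF \<psi>]])
  then show "isCont (f_I_symbol \<psi> I) x" for x
    unfolding f_I_symbol_def[abs_def] by (intro continuous_intros isCont_fourier)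
  show "f_I_symbol \<psi> I \<xi> = 0" if "\<bar>\<xi>\<bar> > R / dlen I" for \<xi>
    using fourier_psi_I_vanishing[OF bounded_continuous_integrableD(1)[OF \<psi>] vanish that]
    by (simp add: f_I_symbol_def)
qed

lemma f_I_symbol_weight:
  "\<xi> \<noteq> 0 \<Longrightarrow> (norm (f_I_symbol \<psi> I \<xi>))^2 / (4*pi*\<bar>\<xi>\<bar>)^2 = dlen I * (norm (fourier (psi_I \<psi> I) \<xi>))^2"
  using dlen_pos[of I] by (simp add: f_I_symbol_def norm_mult power_mult_distrib abs_mult)

lemma f_I_symbol_product:
  "\<xi> \<noteq> 0 \<Longrightarrow> f_I_symbol \<psi> I \<xi> * cnj (f_I_symbol \<psi> J \<xi>) / complex_of_real ((4*pi*\<bar>\<xi>\<bar>)^2)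
     = complex_of_real (sqrt (dlen I * dlen J)) * (fourier (psi_I \<psi> I) \<xi> * cnj (fourier (psi_I \<psi> J) \<xi>))"
  using dlen_pos[of I] dlen_pos[of J]
  by (simp add: f_I_symbol_def real_sqrt_mult power2_eq_square field_simps)

lemma integrable_f_I_symbol_weight:
  assumes "bounded_continuous_integrable \<psi>"
  shows "integrable lborel (\<lambda>\<xi>. (norm (f_I_symbol \<psi> I \<xi>))^2 / (4*pi*\<bar>\<xi>\<bar>)^2)"
proof (rule integrable_cong_AE_imp)
  show "integrable lborel (\<lambda>\<xi>. dlen I * (norm (fourier (psi_I \<psi> I) \<xi>))^2)"
    using integrable_norm_fourier_sq[OF bounded_continuous_integrable_psi_I[OF assms]] by simp
  show "AE \<xi> in lborel. dlen I * (norm (fourier (psi_I \<psi> I) \<xi>))^2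
      = (norm (f_I_symbol \<psi> I \<xi>))^2 / (4*pi*\<bar>\<xi>\<bar>)^2"
    using AE_lborel_singleton[of 0] by eventually_elim (simp add: f_I_symbol_weight)
  have "integrable lborel (psi_I \<psi> I)"
    by (rule bounded_continuous_integrableD(1)[OF bounded_continuous_integrable_psi_I[OF assms]])
  then have [measurable]: "psi_I \<psi> I \<in> borel_measurable borel"
    by (simp add: borel_measurable_integrable)
  show "(\<lambda>\<xi>. (norm (f_I_symbol \<psi> I \<xi>))^2 / (4*pi*\<bar>\<xi>\<bar>)^2) \<in> borel_measurable lborel"
    unfolding f_I_symbol_def by measurable
qed

lemma area_integral_f_I:
  assumes \<psi>: "bounded_continuous_integrable \<psi>" and vanish: "\<And>\<eta>. \<bar>\<eta>\<bar> > R \<Longrightarrow> fourier \<psi> \<eta> = 0"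
  shows "set_integrable lborel upper_half_plane
           (\<lambda>z. poisson_ext (f_I \<psi> I) z * cnj (poisson_ext (f_I \<psi> J) z) * complex_of_real (Im z))"
    and "(LINT z:upper_half_plane|lborel.
            poisson_ext (f_I \<psi> I) z * cnj (poisson_ext (f_I \<psi> J) z) * complex_of_real (Im z))
         = complex_of_real (sqrt (dlen I * dlen J)) * L2_inner (psi_I \<psi> I) (psi_I \<psi> J)"
proof -
  note area = poisson_area_identity[OF
      bounded_continuous_integrable_f_I_symbol[OF \<psi> vanish, where I=I]
      bounded_continuous_integrable_f_I_symbol[OF \<psi> vanish, where I=J]
      integrable_f_I_symbol_weight[OF \<psi>, where I=I] integrable_f_I_symbol_weight[OF \<psi>, where I=J],
      folded f_I_eq_inv_fourier]
  show "set_integrable lborel upper_half_plane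
      (\<lambda>z. poisson_ext (f_I \<psi> I) z * cnj (poisson_ext (f_I \<psi> J) z) * complex_of_real (Im z))"
    by (rule area(1))
  have "(LINT \<xi>|lborel. f_I_symbol \<psi> I \<xi> * cnj (f_I_symbol \<psi> J \<xi>) / complex_of_real ((4*pi*\<bar>\<xi>\<bar>)^2))
      = (LINT \<xi>|lborel. complex_of_real (sqrt (dlen I * dlen J))
           * (fourier (psi_I \<psi> I) \<xi> * cnj (fourier (psi_I \<psi> J) \<xi>)))"
  proof (rule integral_cong_AE)
    have "psi_I \<psi> K \<in> borel_measurable borel" for K
      using bounded_continuous_integrableD(4)[OF bounded_continuous_integrable_psi_I[OF \<psi>]] .
    note [measurable] = this
    show "(\<lambda>\<xi>. f_I_symbol \<psi> I \<xi> * cnj (f_I_symbol \<psi> J \<xi>) / complex_of_real ((4*pi*\<bar>\<xi>\<bar>)^2))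
        \<in> borel_measurable lborel"
      unfolding f_I_symbol_def by measurable
    show "(\<lambda>\<xi>. complex_of_real (sqrt (dlen I * dlen J)) * (fourier (psi_I \<psi> I) \<xi> * cnj (fourier (psi_I \<psi> J) \<xi>)))
        \<in> borel_measurable lborel"
      by measurable
    show "AE \<xi> in lborel. f_I_symbol \<psi> I \<xi> * cnj (f_I_symbol \<psi> J \<xi>) / complex_of_real ((4*pi*\<bar>\<xi>\<bar>)^2)
        = complex_of_real (sqrt (dlen I * dlen J)) * (fourier (psi_I \<psi> I) \<xi> * cnj (fourier (psi_I \<psi> J) \<xi>))"
      using AE_lborel_singleton[of 0] by eventually_elim (rule f_I_symbol_product)
  qed
  also have "\<dots> = complex_of_real (sqrt (dlen I * dlen J)) * L2_inner (psi_I \<psi> I) (psi_I \<psi> J)"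
    unfolding integral_mult_right_zero L2_inner_def
    by (simp only: parseval_fourier[OF bounded_continuous_integrable_psi_I[OF \<psi>] bounded_continuous_integrable_psi_I[OF \<psi>]])
  finally show "(LINT z:upper_half_plane|lborel.
      poisson_ext (f_I \<psi> I) z * cnj (poisson_ext (f_I \<psi> J) z) * complex_of_real (Im z))
      = complex_of_real (sqrt (dlen I * dlen J)) * L2_inner (psi_I \<psi> I) (psi_I \<psi> J)"
    using area(2) by simp
qed

theorem lemma9:
  fixes \<psi> :: "real \<Rightarrow> complex" and I J :: "int \<times> int"
  assumes schw: "schwartz \<psi>"
    and even: "\<forall>x. \<psi> (- x) = \<psi> x"
    and ft_nonneg: "\<forall>\<xi>. fourier \<psi> \<xi> \<in> \<real> \<and> 0 \<le> Re (fourier \<psi> \<xi>)"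
    and ft_supp: "closure {\<xi>. fourier \<psi> \<xi> \<noteq> 0} \<subseteq> {-4/3..-1/3} \<union> {1/3..4/3}"
    and ft_pos: "\<forall>\<xi>\<in>{3/8..5/4}. 0 < Re (fourier \<psi> \<xi>)"
    and onb: "L2_orthonormal_basis UNIV (psi_I \<psi>)"
  shows "set_integrable lborel upper_half_plane
           (\<lambda>z. poisson_ext (f_I \<psi> I) z * cnj (poisson_ext (f_I \<psi> J) z) * complex_of_real (Im z))
       \<and> (LINT z:upper_half_plane|lborel.
            poisson_ext (f_I \<psi> I) z * cnj (poisson_ext (f_I \<psi> J) z) * complex_of_real (Im z))
         = complex_of_real (if I = J then dlen I else 0)"
proof -
  have vanish: "fourier \<psi> \<eta> = 0" if "\<bar>\<eta>\<bar> > 4/3" for \<eta>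
    using that ft_supp closure_subset[of "{\<xi>. fourier \<psi> \<xi> \<noteq> 0}"] by fastforce
  note area = area_integral_f_I[where R="4/3" and I=I and J=J,
      OF bounded_continuous_integrable_schwartz[OF schw] vanish]
  have "L2_inner (psi_I \<psi> I) (psi_I \<psi> J) = (if I = J then 1 else 0)"
    using onb unfolding L2_orthonormal_basis_def by blast
  then show ?thesis
    using area dlen_pos[of J] by auto
qed

end
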